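(* Fix $m\in\mathbb N$. There is a constant $C_m>0$ such that for all $v,w\in F(t_1,t_2)$ with $|v|,|w|\le m$ and all $N\in\mathbb N$, the word $$\big[v(y_1,y_2),\,w(x_1,x_2)^N\big]\,\big[v(x_1,x_2),\,w(y_1,y_2)^N\big]^{-1}\in F(x_1,x_2,y_1,y_2)$$ represents the trivial element of $K$ and has area at most $C_m\cdot N^2$.
   Context: Let $F_2^{(a)},F_2^{(b)},F_2^{(c)}$ be free groups with bases $a_1,a_2$; $b_1,b_2$; $c_1,c_2$, let $\psi\colon F_2^{(a)}\times F_2^{(b)}\times F_2^{(c)}\to\mathbb Z^2$ send $a_i,b_i,c_i\mapsto e_i$, and $K=\ker\psi$. $K$ is generated by $x_i=a_ic_i^{-1}$, $y_i=b_ic_i^{-1}$ ($i=1,2$), with finite presentation $\langle x_1,x_2,y_1,y_2\mid [x_1,y_1],[x_2,y_2],[x_1^{\epsilon_1},y_2^{\epsilon_2}][x_2^{\epsilon_2},y_1^{\epsilon_1}]\ (\epsilon_1,\epsilon_2\in\{\pm1\})\rangle$, where $[g,h]=ghg^{-1}h^{-1}$. Area is with respect to this presentation: the least number of conjugates of relators or their inverses whose product is the given word in $F(x_1,x_2,y_1,y_2)$. For $w\in F(t_1,t_2)$, $w(u_1,u_2)$ is the image under $t_i\mapsto u_i$, and $|w|$ is word length. *)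

theory Defs
  imports Main "HOL-Library.Multiset" Complex_Main
begin

text \<open>A letter is a generator with a sign: (a, True) is a, (a, False) is a^-1.
  Words are lists of letters; elements of the free group are words modulo free equivalence.\<close>

type_synonym 'a word = "('a \<times> bool) list"

definition inv_word :: "'a word \<Rightarrow> 'a word" where
  "inv_word w = rev (map (\<lambda>(a, s). (a, \<not> s)) w)"

definition cancel1 :: "'a word \<Rightarrow> 'a word \<Rightarrow> bool" where
  "cancel1 xs ys \<longleftrightarrow> (\<exists>u v a s. xs = u @ [(a, s), (a, \<not> s)] @ v \<and> ys = u @ v)"

definition free_eq :: "'a word \<Rightarrow> 'a word \<Rightarrow> bool" where
  "free_eq = (\<lambda>x y. cancel1 x y \<or> cancel1 y x)\<^sup>*\<^sup>*"

definition comm :: "'a word \<Rightarrow> 'a word \<Rightarrow> 'a word" where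
  "comm g h = g @ h @ inv_word g @ inv_word h"

definition wpow :: "'a word \<Rightarrow> nat \<Rightarrow> 'a word" where
  "wpow w n = concat (replicate n w)"

datatype tgen = T1 | T2

definition subst2 :: "tgen word \<Rightarrow> 'a word \<Rightarrow> 'a word \<Rightarrow> 'a word" where
  "subst2 w u1 u2 = concat (map (\<lambda>(t, s).
      let u = (case t of T1 \<Rightarrow> u1 | T2 \<Rightarrow> u2) in if s then u else inv_word u) w)"

definition conj_prod :: "('a word \<times> 'a word \<times> bool) list \<Rightarrow> 'a word" where
  "conj_prod ps = concat (map (\<lambda>(u, r, e). u @ (if e then r else inv_word r) @ inv_word u) ps)"

definition null_rep :: "'a word set \<Rightarrow> 'a word \<Rightarrow> bool" where
  "null_rep R w \<longleftrightarrow> (\<exists>ps. (\<forall>(u, r, e) \<in> set ps. r \<in> R) \<and> free_eq w (conj_prod ps))"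

definition area :: "'a word set \<Rightarrow> 'a word \<Rightarrow> nat" where
  "area R w = (LEAST k. \<exists>ps. length ps = k \<and> (\<forall>(u, r, e) \<in> set ps. r \<in> R)
                              \<and> free_eq w (conj_prod ps))"

datatype kgen = X1 | X2 | Y1 | Y2

definition gw :: "'a \<Rightarrow> bool \<Rightarrow> 'a word" where
  "gw a s = [(a, s)]"

definition K_relators :: "kgen word set" where
  "K_relators = {comm (gw X1 True) (gw Y1 True), comm (gw X2 True) (gw Y2 True)}
     \<union> {comm (gw X1 e1) (gw Y2 e2) @ comm (gw X2 e2) (gw Y1 e1) | e1 e2. True}"


end

theory Submission
  imports Defs
begin

text \<open>Write \<open>P(w)\<close> and \<open>Q(w)\<close> for \<open>w(x\<^sub>1, x\<^sub>2)\<close> and \<open>w(y\<^sub>1, y\<^sub>2)\<close>, and \<open>z = Q(w)\<^sup>-\<^sup>1 P(w)\<close>.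
  In \<open>K\<close>, \<open>z\<close> commutes with \<open>Q(w)\<close> and with \<open>a = [Q(v), P(w)]\<close>, and \<open>a = [P(v), Q(w)]\<close>.
  Hence \<open>[Q(v), P(w)\<^sup>N] = (a P(w))\<^sup>N P(w)\<^sup>-\<^sup>N = (a Q(w) z)\<^sup>N (Q(w) z)\<^sup>-\<^sup>N\<close>; moving the \<open>N\<close>
  copies of \<open>z\<close> to the right costs \<open>O(N\<^sup>2)\<close> uses of these two commutations and leaves
  \<open>(a Q(w))\<^sup>N Q(w)\<^sup>-\<^sup>N\<close>, and replacing each \<open>a\<close> by \<open>[P(v), Q(w)]\<close> costs \<open>O(N)\<close> more and gives
  \<open>[P(v), Q(w)\<^sup>N]\<close>. The constants depend only on \<open>(v, w)\<close>, and there are finitely many pairs with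
  \<open>|v|, |w| \<le> m\<close>.

  The three identities in \<open>K\<close> follow, by induction over the letters of \<open>v\<close> and \<open>w\<close>, from the
  relators and from the fact that \<open>z\<^sub>i = y\<^sub>i\<^sup>-\<^sup>1 x\<^sub>i\<close> centralizes the normal closure of \<open>[x\<^sub>1, y\<^sub>2]\<close>.
  That fact is proved with automorphisms of \<open>K\<close> given by explicit substitutions, whose
  required relations are checked against explicit products of conjugates of relators.\<close>

definition inv_letter :: "'a \<times> bool \<Rightarrow> 'a \<times> bool" where
  "inv_letter x = (fst x, \<not> snd x)"

lemma inv_letter_inv_letter [simp]: "inv_letter (inv_letter x) = x"
  by (simp add: inv_letter_def)

lemma inv_word_conv: "inv_word w = rev (map inv_letter w)"
  unfolding inv_word_def inv_letter_def by (simp add: case_prod_beta')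

lemma inv_word_Nil [simp]: "inv_word [] = []"
  and inv_word_Cons [simp]: "inv_word (x # w) = inv_word w @ [inv_letter x]"
  and inv_word_append [simp]: "inv_word (u @ v) = inv_word v @ inv_word u"
  and inv_word_inv_word [simp]: "inv_word (inv_word u) = u"
  by (simp_all add: inv_word_conv rev_map comp_def)

lemma free_eq_refl [simp, intro]: "free_eq x x"
  by (simp add: free_eq_def)

lemma free_eq_trans [trans]: "free_eq x y \<Longrightarrow> free_eq y z \<Longrightarrow> free_eq x z"
  unfolding free_eq_def by (rule rtranclp_trans)

lemma free_eq_sym: "free_eq x y \<Longrightarrow> free_eq y x"
  unfolding free_eq_def
  by (induction rule: rtranclp_induct) (auto intro: converse_rtranclp_into_rtranclp)

lemma free_eq_map:
  assumes "free_eq x y" and "\<And>x y. cancel1 x y \<Longrightarrow> free_eq (f x) (f y)"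
  shows "free_eq (f x) (f y)"
  using assms(1) unfolding free_eq_def
proof (induction rule: rtranclp_induct)
  case (step y z)
  then have "free_eq (f y) (f z)"
    using assms(2) free_eq_sym unfolding free_eq_def by blast
  with step.IH show ?case
    using free_eq_trans unfolding free_eq_def by blast
qed simp

lemma free_eq_context: "free_eq x y \<Longrightarrow> free_eq (p @ x @ q) (p @ y @ q)"
proof (erule free_eq_map)
  fix x y :: "'a word"
  assume "cancel1 x y"
  then have "cancel1 (p @ x @ q) (p @ y @ q)"
    unfolding cancel1_def by (metis append.assoc)
  then show "free_eq (p @ x @ q) (p @ y @ q)"
    unfolding free_eq_def by blast
qed

lemma free_eq_append: "free_eq a b \<Longrightarrow> free_eq c d \<Longrightarrow> free_eq (a @ c) (b @ d)"
  using free_eq_context[of a b "[]" c] free_eq_context[of c d b "[]"]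
  by (auto intro: free_eq_trans)

lemma free_eq_inv_word: "free_eq x y \<Longrightarrow> free_eq (inv_word x) (inv_word y)"
proof (erule free_eq_map)
  fix x y :: "'a word"
  assume "cancel1 x y"
  then obtain u v a s where "x = u @ [(a, s), (a, \<not> s)] @ v" "y = u @ v"
    unfolding cancel1_def by blast
  then have "cancel1 (inv_word x) (inv_word y)"
    unfolding cancel1_def
    by (intro exI[of _ "inv_word v"] exI[of _ "inv_word u"] exI[of _ a] exI[of _ s])
       (simp add: inv_letter_def)
  then show "free_eq (inv_word x) (inv_word y)"
    unfolding free_eq_def by blast
qed

lemma free_eq_append_inv_word: "free_eq (u @ inv_word u) []"
proof (induction u)
  case (Cons x u)
  have "free_eq ([x] @ (u @ inv_word u) @ [inv_letter x]) ([x] @ [] @ [inv_letter x])"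
    using Cons by (rule free_eq_context)
  moreover have "cancel1 [x, inv_letter x] []"
    unfolding cancel1_def inv_letter_def by (cases x) auto
  ultimately show ?case
    unfolding free_eq_def by (auto intro: rtranclp.rtrancl_into_rtrancl)
qed simp

lemma free_eq_inv_word_append: "free_eq (inv_word u @ u) []"
  using free_eq_append_inv_word[of "inv_word u"] by simp

lemma free_eq_cancel_right: "free_eq (p @ u @ inv_word u @ q) (p @ q)"
  using free_eq_context[OF free_eq_append_inv_word[of u], of p q] by simp

lemma free_eq_cancel_left: "free_eq (p @ inv_word u @ u @ q) (p @ q)"
  using free_eq_context[OF free_eq_inv_word_append[of u], of p q] by simp

fun free_reduce :: "'a word \<Rightarrow> 'a word" where
  "free_reduce [] = []"
| "free_reduce (x # w) = (case free_reduce w of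
      [] \<Rightarrow> [x]
    | y # w' \<Rightarrow> if y = inv_letter x then w' else x # y # w')"

lemma free_eq_free_reduce: "free_eq w (free_reduce w)"
proof (induction w)
  case (Cons x w)
  have step: "free_eq (x # w) (x # free_reduce w)"
    using free_eq_context[OF Cons, of "[x]" "[]"] by simp
  show ?case
  proof (cases "free_reduce w")
    case (Cons y w')
    have "free_eq ([x] @ [y] @ w') w'" if "y = inv_letter x"
      using free_eq_cancel_right[of "[]" "[x]" w'] that by simp
    with step Cons show ?thesis
      by (auto intro: free_eq_trans)
  qed (use step in simp)
qed simp

lemma free_eq_if_free_reduce_eq: "free_reduce u = free_reduce v \<Longrightarrow> free_eq u v"
  by (metis free_eq_free_reduce free_eq_sym free_eq_trans)

lemma wpow_0 [simp]: "wpow w 0 = []"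
  and wpow_Suc: "wpow w (Suc n) = w @ wpow w n"
  by (simp_all add: wpow_def)

lemma wpow_Suc_right: "wpow w (Suc n) = wpow w n @ w"
  by (induction n) (simp_all add: wpow_Suc)

lemma free_eq_wpow: "free_eq u v \<Longrightarrow> free_eq (wpow u n) (wpow v n)"
  by (induction n) (simp_all add: wpow_Suc free_eq_append)

lemma free_eq_wpow_conjugate: "free_eq (wpow (p @ w @ inv_word p) n) (p @ wpow w n @ inv_word p)"
proof (induction n)
  case 0
  show ?case using free_eq_sym[OF free_eq_append_inv_word[of p]] by simp
next
  case (Suc n)
  have "free_eq (wpow (p @ w @ inv_word p) (Suc n)) ((p @ w) @ inv_word p @ p @ wpow w n @ inv_word p)"
    unfolding wpow_Suc using free_eq_append[OF free_eq_refl[of "p @ w @ inv_word p"] Suc] by simp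
  also have "free_eq \<dots> ((p @ w) @ wpow w n @ inv_word p)"
    by (rule free_eq_cancel_left)
  finally show ?case by (simp add: wpow_Suc)
qed

definition subst :: "('a \<Rightarrow> 'b word) \<Rightarrow> 'a word \<Rightarrow> 'b word" where
  "subst \<sigma> w = concat (map (\<lambda>(a, s). if s then \<sigma> a else inv_word (\<sigma> a)) w)"

lemma subst_Nil [simp]: "subst \<sigma> [] = []"
  and subst_Cons [simp]: "subst \<sigma> ((a, s) # w) = (if s then \<sigma> a else inv_word (\<sigma> a)) @ subst \<sigma> w"
  and subst_append [simp]: "subst \<sigma> (u @ v) = subst \<sigma> u @ subst \<sigma> v"
  by (simp_all add: subst_def)

lemma subst2_conv_subst: "subst2 w u1 u2 = subst (case_tgen u1 u2) w"
  unfolding subst2_def subst_def Let_def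
  by (rule arg_cong[where f = concat], rule map_cong) (auto split: tgen.split)

section \<open>Area-bounded equality in a presentation\<close>

lemma conj_prod_Nil [simp]: "conj_prod [] = []"
  and conj_prod_Cons [simp]:
    "conj_prod ((c, r, e) # ps) = c @ (if e then r else inv_word r) @ inv_word c @ conj_prod ps"
  and conj_prod_append [simp]: "conj_prod (ps @ qs) = conj_prod ps @ conj_prod qs"
  by (simp_all add: conj_prod_def)

lemma inv_word_conj_prod:
  "inv_word (conj_prod ps) = conj_prod (rev (map (\<lambda>(c, r, e). (c, r, \<not> e)) ps))"
  by (induction ps) auto

lemma free_eq_conjugate_conj_prod:
  "free_eq (p @ conj_prod ps @ inv_word p) (conj_prod (map (\<lambda>(c, r, e). (p @ c, r, e)) ps))"
proof (induction ps)
  case Nil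
  show ?case by (simp add: free_eq_append_inv_word)
next
  case (Cons x ps)
  obtain c r e where x: "x = (c, r, e)" by (cases x)
  define f where "f = p @ c @ (if e then r else inv_word r) @ inv_word c"
  have "free_eq (p @ conj_prod (x # ps) @ inv_word p) ((f @ inv_word p) @ p @ conj_prod ps @ inv_word p)"
    using free_eq_sym[OF free_eq_cancel_left[of f p "conj_prod ps @ inv_word p"]]
    by (simp add: x f_def)
  also have "free_eq \<dots> ((f @ inv_word p) @ conj_prod (map (\<lambda>(c, r, e). (p @ c, r, e)) ps))"
    by (rule free_eq_append[OF free_eq_refl Cons])
  finally show ?case by (simp add: x f_def)
qed

definition eq_by_relators :: "'a word set \<Rightarrow> nat \<Rightarrow> 'a word \<Rightarrow> 'a word \<Rightarrow> bool" where
  "eq_by_relators R k u v \<longleftrightarrow>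
     (\<exists>ps. length ps \<le> k \<and> (\<forall>(c, r, e) \<in> set ps. r \<in> R) \<and> free_eq (u @ inv_word v) (conj_prod ps))"

lemma eq_by_relatorsI:
  "free_eq (u @ inv_word v) (conj_prod ps) \<Longrightarrow> \<forall>(c, r, e) \<in> set ps. r \<in> R \<Longrightarrow>
    eq_by_relators R (length ps) u v"
  unfolding eq_by_relators_def by blast

lemma eq_by_relators_if_free_eq: "free_eq u v \<Longrightarrow> eq_by_relators R 0 u v"
  unfolding eq_by_relators_def
  using free_eq_trans[OF free_eq_append[OF _ free_eq_refl] free_eq_append_inv_word] by force

lemma eq_by_relators_mono: "eq_by_relators R k u v \<Longrightarrow> k \<le> k' \<Longrightarrow> eq_by_relators R k' u v"
  unfolding eq_by_relators_def by (meson order_trans)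

lemma eq_by_relators_trans [trans]:
  assumes "eq_by_relators R k1 u v" and "eq_by_relators R k2 v w"
  shows "eq_by_relators R (k1 + k2) u w"
proof -
  obtain ps qs where ps: "length ps \<le> k1" "\<forall>(c, r, e) \<in> set ps. r \<in> R"
      "free_eq (u @ inv_word v) (conj_prod ps)"
    and qs: "length qs \<le> k2" "\<forall>(c, r, e) \<in> set qs. r \<in> R"
      "free_eq (v @ inv_word w) (conj_prod qs)"
    using assms unfolding eq_by_relators_def by blast
  have "free_eq (u @ inv_word w) ((u @ inv_word v) @ (v @ inv_word w))"
    using free_eq_sym[OF free_eq_cancel_left[of u v "inv_word w"]] by simp
  also have "free_eq \<dots> (conj_prod (ps @ qs))"
    using free_eq_append[OF ps(3) qs(3)] by simp
  finally show ?thesis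
    unfolding eq_by_relators_def using ps qs by (intro exI[of _ "ps @ qs"]) auto
qed

lemma eq_by_relators_free_eq_trans [trans]:
  "free_eq u v \<Longrightarrow> eq_by_relators R k v w \<Longrightarrow> eq_by_relators R k u w"
  using eq_by_relators_trans[OF eq_by_relators_if_free_eq] by fastforce

lemma eq_by_relators_trans_free_eq [trans]:
  "eq_by_relators R k u v \<Longrightarrow> free_eq v w \<Longrightarrow> eq_by_relators R k u w"
  using eq_by_relators_trans[OF _ eq_by_relators_if_free_eq] by fastforce

lemma eq_by_relators_sym: "eq_by_relators R k u v \<Longrightarrow> eq_by_relators R k v u"
  unfolding eq_by_relators_def
proof (elim exE conjE)
  fix ps
  assume "length ps \<le> k" "\<forall>(c, r, e) \<in> set ps. r \<in> R" "free_eq (u @ inv_word v) (conj_prod ps)"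
  then show "\<exists>ps. length ps \<le> k \<and> (\<forall>(c, r, e) \<in> set ps. r \<in> R) \<and>
      free_eq (v @ inv_word u) (conj_prod ps)"
    using free_eq_inv_word[of "u @ inv_word v" "conj_prod ps"]
    by (intro exI[of _ "rev (map (\<lambda>(c, r, e). (c, r, \<not> e)) ps)"]) (auto simp: inv_word_conj_prod)
qed

lemma eq_by_relators_context:
  "eq_by_relators R k u v \<Longrightarrow> eq_by_relators R k (p @ u @ q) (p @ v @ q)"
  unfolding eq_by_relators_def
proof (elim exE conjE)
  fix ps
  assume ps: "length ps \<le> k" "\<forall>(c, r, e) \<in> set ps. r \<in> R" "free_eq (u @ inv_word v) (conj_prod ps)"
  have "free_eq ((p @ u @ q) @ inv_word (p @ v @ q)) (p @ (u @ inv_word v) @ inv_word p)"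
    using free_eq_cancel_right[of "p @ u" q "inv_word v @ inv_word p"] by simp
  also have "free_eq \<dots> (p @ conj_prod ps @ inv_word p)"
    using ps(3) by (rule free_eq_context)
  also have "free_eq \<dots> (conj_prod (map (\<lambda>(c, r, e). (p @ c, r, e)) ps))"
    by (rule free_eq_conjugate_conj_prod)
  finally show "\<exists>ps. length ps \<le> k \<and> (\<forall>(c, r, e) \<in> set ps. r \<in> R) \<and>
      free_eq ((p @ u @ q) @ inv_word (p @ v @ q)) (conj_prod ps)"
    using ps by (intro exI[of _ "map (\<lambda>(c, r, e). (p @ c, r, e)) ps"]) auto
qed

lemma eq_by_relators_append_left: "eq_by_relators R k u v \<Longrightarrow> eq_by_relators R k (p @ u) (p @ v)"
  using eq_by_relators_context[of R k u v p "[]"] by simp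

lemma eq_by_relators_append_right: "eq_by_relators R k u v \<Longrightarrow> eq_by_relators R k (u @ q) (v @ q)"
  using eq_by_relators_context[of R k u v "[]" q] by simp

lemma eq_by_relators_append:
  "eq_by_relators R k1 u u' \<Longrightarrow> eq_by_relators R k2 v v' \<Longrightarrow> eq_by_relators R (k1 + k2) (u @ v) (u' @ v')"
  using eq_by_relators_trans[OF eq_by_relators_append_right eq_by_relators_append_left] by blast

lemma eq_by_relators_inv_word:
  assumes "eq_by_relators R k u v"
  shows "eq_by_relators R k (inv_word u) (inv_word v)"
proof -
  have "free_eq (inv_word v) (inv_word u @ u @ inv_word v)"
    using free_eq_sym[OF free_eq_cancel_left[of "[]" u "inv_word v"]] by simp
  also have "eq_by_relators R k \<dots> (inv_word u @ v @ inv_word v)"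
    using assms by (rule eq_by_relators_context)
  also have "free_eq \<dots> (inv_word u)"
    using free_eq_cancel_right[of "inv_word u" v "[]"] by simp
  finally show ?thesis by (rule eq_by_relators_sym)
qed

lemma eq_by_relators_iff_Nil: "eq_by_relators R k (u @ inv_word v) [] \<longleftrightarrow> eq_by_relators R k u v"
  by (simp add: eq_by_relators_def)

lemma area_le_if_eq_by_relators:
  assumes "eq_by_relators R k w []"
  shows "null_rep R w \<and> area R w \<le> k"
proof -
  obtain ps where ps: "length ps \<le> k" "\<forall>(c, r, e) \<in> set ps. r \<in> R" "free_eq w (conj_prod ps)"
    using assms unfolding eq_by_relators_def by auto
  then have "area R w \<le> length ps"
    unfolding area_def by (intro Least_le) blast
  with ps show ?thesis
    unfolding null_rep_def by auto
qed

definition eq_mod_relators :: "'a word set \<Rightarrow> 'a word \<Rightarrow> 'a word \<Rightarrow> bool" where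
  "eq_mod_relators R u v \<longleftrightarrow> (\<exists>k. eq_by_relators R k u v)"

lemma eq_mod_relators_iff_null_rep: "eq_mod_relators R u v \<longleftrightarrow> null_rep R (u @ inv_word v)"
  unfolding eq_mod_relators_def eq_by_relators_def null_rep_def by auto

lemma equivp_eq_mod_relators: "equivp (eq_mod_relators R)"
  unfolding eq_mod_relators_def
  by (intro equivpI reflpI sympI transpI)
     (blast intro: eq_by_relators_if_free_eq eq_by_relators_sym eq_by_relators_trans)+

lemma eq_mod_relators_append:
  "eq_mod_relators R u u' \<Longrightarrow> eq_mod_relators R v v' \<Longrightarrow> eq_mod_relators R (u @ v) (u' @ v')"
  unfolding eq_mod_relators_def by (blast intro: eq_by_relators_append)

lemma eq_mod_relators_inv_word:
  "eq_mod_relators R u v \<Longrightarrow> eq_mod_relators R (inv_word u) (inv_word v)"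
  unfolding eq_mod_relators_def by (blast intro: eq_by_relators_inv_word)

lemma eq_mod_relators_if_free_eq: "free_eq u v \<Longrightarrow> eq_mod_relators R u v"
  unfolding eq_mod_relators_def by (blast intro: eq_by_relators_if_free_eq)

lemma eq_by_relators_wpow:
  "eq_by_relators R k u v \<Longrightarrow> eq_by_relators R (n * k) (wpow u n) (wpow v n)"
  by (induction n) (simp_all add: wpow_Suc eq_by_relators_append eq_by_relators_if_free_eq)

lemma eq_by_relators_wpow_commute:
  assumes "eq_by_relators R k (z @ q) (q @ z)"
  shows "eq_by_relators R (n * k) (wpow z n @ q) (q @ wpow z n)"
proof (induction n)
  case 0
  show ?case by (simp add: eq_by_relators_if_free_eq)
next
  case (Suc n)
  have "eq_by_relators R (n * k) (z @ wpow z n @ q) (z @ q @ wpow z n)"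
    using Suc by (rule eq_by_relators_append_left)
  also have "eq_by_relators R k (z @ q @ wpow z n) (q @ z @ wpow z n)"
    using eq_by_relators_append_right[OF assms, of "wpow z n"] by simp
  finally show ?case by (simp add: wpow_Suc add.commute)
qed

lemma eq_by_relators_wpow_append:
  assumes "eq_by_relators R k (z @ q) (q @ z)"
  shows "eq_by_relators R (n * n * k) (wpow (q @ z) n) (wpow q n @ wpow z n)"
proof (induction n)
  case 0
  show ?case by (simp add: eq_by_relators_if_free_eq)
next
  case (Suc n)
  have "eq_by_relators R (n * n * k) (wpow (q @ z) n @ q @ z) ((wpow q n @ wpow z n) @ q @ z)"
    using Suc by (rule eq_by_relators_append_right)
  also have "eq_by_relators R (n * k) \<dots> (wpow q n @ (q @ wpow z n) @ z)"
    using eq_by_relators_context[OF eq_by_relators_wpow_commute[OF assms, of n], of "wpow q n" z]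
    by simp
  finally have "eq_by_relators R (n * n * k + n * k) (wpow (q @ z) (Suc n)) (wpow q (Suc n) @ wpow z (Suc n))"
    by (simp add: wpow_Suc_right)
  then show ?case
    by (rule eq_by_relators_mono) (simp add: algebra_simps)
qed

lemma free_eq_comm_wpow: "free_eq (comm u (wpow x n)) (wpow (comm u x @ x) n @ inv_word (wpow x n))"
proof -
  have "free_eq (comm u x @ x) (u @ x @ inv_word u)"
    using free_eq_cancel_left[of "u @ x @ inv_word u" x "[]"] by (simp add: comm_def)
  then have "free_eq (wpow (comm u x @ x) n) (u @ wpow x n @ inv_word u)"
    using free_eq_trans[OF free_eq_wpow free_eq_wpow_conjugate] by blast
  then show ?thesis
    unfolding comm_def using free_eq_append[OF free_eq_sym free_eq_refl] by fastforce
qed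

lemma eq_by_relators_comm_wpow:
  fixes u u' x y :: "'a word"
  defines "z \<equiv> inv_word y @ x" and "a \<equiv> comm u x"
  assumes zy: "eq_by_relators R k1 (z @ y) (y @ z)"
    and za: "eq_by_relators R k2 (z @ a) (a @ z)"
    and aa': "eq_by_relators R k3 a (comm u' y)"
  shows "eq_by_relators R ((2 * k1 + k2 + k3) * n * n) (comm u (wpow x n)) (comm u' (wpow y n))"
proof -
  have x: "free_eq x (y @ z)"
    using free_eq_sym[OF free_eq_cancel_right[of "[]" y x]] by (simp add: z_def)
  have "eq_by_relators R k2 (z @ a @ y) (a @ z @ y)"
    using eq_by_relators_append_right[OF za, of y] by simp
  also have "eq_by_relators R k1 \<dots> (a @ y @ z)"
    using zy by (rule eq_by_relators_append_left)
  finally have zay: "eq_by_relators R (k2 + k1) (z @ a @ y) ((a @ y) @ z)" by simp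
  have "free_eq (comm u (wpow x n)) (wpow (a @ x) n @ inv_word (wpow x n))"
    unfolding a_def by (rule free_eq_comm_wpow)
  also have "free_eq \<dots> (wpow ((a @ y) @ z) n @ inv_word (wpow (y @ z) n))"
    using x by (auto intro!: free_eq_append free_eq_wpow free_eq_inv_word)
  also have "eq_by_relators R (n * n * (k2 + k1) + n * n * k1) \<dots>
      ((wpow (a @ y) n @ wpow z n) @ inv_word (wpow z n) @ inv_word (wpow y n))"
    using eq_by_relators_append[OF eq_by_relators_wpow_append[OF zay]
        eq_by_relators_inv_word[OF eq_by_relators_wpow_append[OF zy]]]
    by simp
  also have "free_eq \<dots> (wpow (a @ y) n @ inv_word (wpow y n))"
    using free_eq_cancel_right[of "wpow (a @ y) n" "wpow z n" "inv_word (wpow y n)"] by simp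
  also have "eq_by_relators R (n * k3) \<dots> (wpow (comm u' y @ y) n @ inv_word (wpow y n))"
    using aa' by (intro eq_by_relators_append_right eq_by_relators_wpow eq_by_relators_append_right)
  also have "free_eq \<dots> (comm u' (wpow y n))"
    by (rule free_eq_sym[OF free_eq_comm_wpow])
  finally show ?thesis
    by (rule eq_by_relators_mono) (simp add: algebra_simps mult_le_mono)
qed

definition commutator :: "'g::group_add \<Rightarrow> 'g \<Rightarrow> 'g" where
  "commutator a b = a + b - a - b"

definition conjugate :: "'g::group_add \<Rightarrow> 'g \<Rightarrow> 'g" where
  "conjugate g x = g + x - g"

definition signed :: "bool \<Rightarrow> 'g::group_add \<Rightarrow> 'g" where
  "signed e x = (if e then x else - x)"

lemmas group_add_normalize =
  diff_conv_add_uminus add.assoc minus_add minus_minus add_0_left add_0_right minus_zero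
  add_minus_cancel minus_add_cancel

lemma commutator_add_left: "commutator (a + b) c = conjugate a (commutator b c) + commutator a c"
  and commutator_add_right: "commutator a (b + c) = commutator a b + conjugate b (commutator a c)"
  and commutator_minus_left: "commutator (- a) b = conjugate (- a) (- commutator a b)"
  and commutator_minus_right: "commutator a (- b) = conjugate (- b) (- commutator a b)"
  and commutator_swap: "commutator a b = - commutator b a"
  and conjugate_add: "conjugate g (x + y) = conjugate g x + conjugate g y"
  and conjugate_minus: "conjugate g (- x) = - conjugate g x"
  and conjugate_conjugate: "conjugate g (conjugate h x) = conjugate (g + h) x"
  and conjugate_zero [simp]: "conjugate g 0 = 0"
  and conjugate_by_zero [simp]: "conjugate 0 x = x"
  unfolding commutator_def conjugate_def
  by (simp_all del: add_uminus_conv_diff add: group_add_normalize)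

lemma commutator_eq_0_iff: "commutator a b = 0 \<longleftrightarrow> a + b = b + a"
  by (simp add: commutator_def diff_eq_eq)

lemma conjugate_eq_iff_commute: "conjugate g x = x \<longleftrightarrow> g + x = x + g"
  by (simp add: conjugate_def diff_eq_eq)

lemma commute_minus: "(a::'g::group_add) + b = b + a \<Longrightarrow> - b + a = a - b"
proof -
  assume "a + b = b + a"
  then have "- b + (a + b) + - b = - b + (b + a) + - b"
    by simp
  then show ?thesis
    by (simp del: add_uminus_conv_diff add: add.assoc diff_conv_add_uminus)
qed

lemma commute_add:
  assumes "(a::'g::group_add) + c = c + a" and "b + c = c + b"
  shows "(a + b) + c = c + (a + b)"
proof -
  have "(a + b) + c = a + (c + b)"
    using assms(2) by (simp add: add.assoc)
  also have "\<dots> = c + (a + b)"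
    using assms(1) by (simp add: add.assoc[symmetric])
  finally show ?thesis .
qed

lemma signed_commute: "(a::'g::group_add) + b = b + a \<Longrightarrow> signed e a + signed e' b = signed e' b + signed e a"
proof -
  assume ab: "a + b = b + a"
  have "- a + - b = - b + - a"
    using ab by (metis minus_add)
  then show ?thesis
    using commute_minus[OF ab] commute_minus[OF ab[symmetric]] ab by (simp add: signed_def)
qed

lemma conjugate_add_commuting: "(c::'g::group_add) + x = x + c \<Longrightarrow> conjugate (a + c) x = conjugate a x"
  using conjugate_eq_iff_commute[of c x] by (simp add: conjugate_conjugate[symmetric])

lemma add_commute_of_commutators:
  fixes a b A B g :: "'g::group_add"
  assumes AB: "A + B = B + A" and ab: "a + b = b + a"
    and gA: "commutator b A = g" and gB: "commutator a B = g"
    and Dg: "(a - b) + g = g + (a - b)"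
  shows "(a + A) + (b + B) = (b + B) + (a + A)"
proof -
  define D where "D = a - b"
  have Ab: "A + b = - g + (b + A)"
    unfolding gA[symmetric] commutator_def
    by (simp del: add_uminus_conv_diff add: group_add_normalize)
  have Ba: "B + a = - g + (a + B)"
    unfolding gB[symmetric] commutator_def
    by (simp del: add_uminus_conv_diff add: group_add_normalize)
  have aD: "D + b = a"
    by (simp add: D_def)
  have bD: "b + D = a"
    unfolding D_def using ab[symmetric] by (simp add: add_diff_eq)
  have gD: "- g + D = D + - g"
    using commute_minus[OF Dg[folded D_def]]
    by (simp del: add_uminus_conv_diff add: diff_conv_add_uminus)
  have "(a + A) + (b + B) = a + (A + b) + B"
    by (simp only: add.assoc)
  also have "\<dots> = a + (- g + b) + (A + B)"
    using Ab by (simp only: add.assoc)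
  also have "a + (- g + b) = b + (- g + a)"
  proof -
    have "b + (- g + a) = b + ((- g + D) + b)"
      unfolding aD[symmetric] by (simp only: add.assoc)
    also have "\<dots> = (b + D) + (- g + b)"
      unfolding gD by (simp only: add.assoc)
    finally show ?thesis
      unfolding bD by simp
  qed
  also have "b + (- g + a) + (A + B) = b + (- g + a + B) + A"
    using AB by (simp only: add.assoc)
  also have "\<dots> = b + (B + a) + A"
    unfolding Ba by (simp only: add.assoc)
  also have "\<dots> = (b + B) + (a + A)"
    by (simp only: add.assoc)
  finally show ?thesis .
qed

inductive_set normal_closure :: "'g::group_add set \<Rightarrow> 'g set" for S where
  generator: "s \<in> S \<Longrightarrow> s \<in> normal_closure S"
| zero: "0 \<in> normal_closure S"
| uminus: "x \<in> normal_closure S \<Longrightarrow> - x \<in> normal_closure S"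
| add: "x \<in> normal_closure S \<Longrightarrow> y \<in> normal_closure S \<Longrightarrow> x + y \<in> normal_closure S"
| conjugate: "x \<in> normal_closure S \<Longrightarrow> conjugate g x \<in> normal_closure S"

lemma commutator_signed_in_normal_closure:
  assumes "commutator a b \<in> normal_closure S"
  shows "commutator (signed e a) (signed e' b) \<in> normal_closure S"
proof -
  have "commutator (- a) b \<in> normal_closure S" "commutator a (- b) \<in> normal_closure S"
    unfolding commutator_minus_left commutator_minus_right
    using assms by (auto intro: normal_closure.intros)
  moreover have "commutator (- a) (- b) \<in> normal_closure S"
    unfolding commutator_minus_right
    using calculation by (auto intro: normal_closure.intros)
  ultimately show ?thesis
    using assms by (simp add: signed_def)
qed

definition centralizer :: "'g::group_add set \<Rightarrow> 'g set" where
  "centralizer A = {c. \<forall>x \<in> A. c + x = x + c}"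

lemma centralizer_zero: "0 \<in> centralizer A"
  by (simp add: centralizer_def)

lemma centralizer_uminus: "c \<in> centralizer A \<Longrightarrow> - c \<in> centralizer A"
  unfolding centralizer_def by (auto intro: commute_minus[OF sym])

lemma centralizer_add: "c \<in> centralizer A \<Longrightarrow> d \<in> centralizer A \<Longrightarrow> c + d \<in> centralizer A"
  unfolding centralizer_def by (auto intro: commute_add)

lemma centralizer_conjugate:
  assumes "\<And>g x. x \<in> A \<Longrightarrow> conjugate g x \<in> A" and "c \<in> centralizer A"
  shows "conjugate h c \<in> centralizer A"
  unfolding centralizer_def
proof (intro CollectI ballI)
  fix x assume "x \<in> A"
  then have "c + conjugate (- h) x = conjugate (- h) x + c"
    using assms unfolding centralizer_def by blast
  then have "conjugate h (c + conjugate (- h) x) = conjugate h (conjugate (- h) x + c)"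
    by simp
  then show "conjugate h c + x = x + conjugate h c"
    by (simp add: conjugate_add conjugate_conjugate)
qed

lemma centralizer_normal_closureI:
  assumes "\<And>g s. s \<in> S \<Longrightarrow> c + conjugate g s = conjugate g s + c"
  shows "c \<in> centralizer (normal_closure S)"
proof -
  have "\<forall>g. c + conjugate g x = conjugate g x + c" if "x \<in> normal_closure S" for x
    using that
  proof (induction rule: normal_closure.induct)
    case (uminus x)
    show ?case
    proof
      fix g
      have "c + conjugate g x = conjugate g x + c"
        using uminus.IH by blast
      then show "c + conjugate g (- x) = conjugate g (- x) + c"
        using commute_minus[of c "conjugate g x"] by (simp add: conjugate_minus)
    qed
  next
    case (add x y)
    then show ?case by (simp add: conjugate_add commute_add[OF sym sym])
  next
    case (conjugate x h)
    then show ?case by (simp add: conjugate_conjugate)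
  qed (simp_all add: assms)
  from this[THEN spec[of _ 0]] show ?thesis
    unfolding centralizer_def by simp
qed

definition word_eval :: "('a \<Rightarrow> 'g::group_add) \<Rightarrow> 'a word \<Rightarrow> 'g" where
  "word_eval f w = sum_list (map (\<lambda>(a, e). signed e (f a)) w)"

lemma word_eval_Nil [simp]: "word_eval f [] = 0"
  and word_eval_Cons [simp]: "word_eval f ((a, e) # w) = signed e (f a) + word_eval f w"
  and word_eval_append [simp]: "word_eval f (u @ v) = word_eval f u + word_eval f v"
  by (simp_all add: word_eval_def)

lemma word_eval_inv_word [simp]: "word_eval f (inv_word w) = - word_eval f w"
  by (induction w) (auto simp: inv_letter_def signed_def minus_add)

lemma word_eval_comm [simp]: "word_eval f (comm u v) = commutator (word_eval f u) (word_eval f v)"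
  by (simp del: add_uminus_conv_diff add: comm_def commutator_def diff_conv_add_uminus add.assoc)

lemma word_eval_subst: "word_eval f (subst \<sigma> w) = word_eval (\<lambda>a. word_eval f (\<sigma> a)) w"
  by (induction w) (auto simp: signed_def)

lemma word_eval_conjugate: "word_eval (\<lambda>a. conjugate g (f a)) w = conjugate g (word_eval f w)"
  by (induction w) (auto simp: signed_def conjugate_add conjugate_minus)

lemma word_eval_free_eq: "free_eq u v \<Longrightarrow> word_eval f u = word_eval f v"
  unfolding free_eq_def
proof (induction rule: rtranclp_induct)
  case (step v w)
  then show ?case
    unfolding cancel1_def by (auto simp: signed_def add.assoc)
qed simp

definition respects_relators :: "'a word set \<Rightarrow> ('a \<Rightarrow> 'g::group_add) \<Rightarrow> bool" where
  "respects_relators R f \<longleftrightarrow> (\<forall>r \<in> R. word_eval f r = 0)"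

lemma word_eval_eq_mod_relators:
  assumes "respects_relators R f" and "eq_mod_relators R u v"
  shows "word_eval f u = word_eval f v"
proof -
  obtain ps where ps: "\<forall>(c, r, e) \<in> set ps. r \<in> R" "free_eq (u @ inv_word v) (conj_prod ps)"
    using assms(2) unfolding eq_mod_relators_def eq_by_relators_def by blast
  have "word_eval f (conj_prod ps) = 0"
    using ps(1) assms(1) unfolding respects_relators_def
    by (induction ps) (auto simp: signed_def)
  then have "word_eval f u - word_eval f v = 0"
    using word_eval_free_eq[OF ps(2), of f] by simp
  then show ?thesis
    by simp
qed

section \<open>Commuting copies of a free group\<close>

locale commuting_copies =
  fixes p q :: "'l \<Rightarrow> 'g::group_add" and S :: "'g set"
  assumes letters_commute: "p s + q s = q s + p s"
    and letters_quotient_in_centralizer: "- q s + p s \<in> centralizer (normal_closure S)"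
    and commutator_letters_in: "commutator (signed e (p s)) (signed e' (q t)) \<in> normal_closure S"
    and commutator_letters_swap:
      "commutator (signed e (q s)) (signed e' (p t)) = commutator (signed e (p s)) (signed e' (q t))"
begin

abbreviation "N \<equiv> normal_closure S"

lemma signed_letters_quotient_in_centralizer: "- signed e (q s) + signed e (p s) \<in> centralizer N"
proof (cases e)
  case False
  have "- (- q s + p s) = q s - p s"
    using commute_minus[OF letters_commute[symmetric]] by (simp add: minus_add)
  then show ?thesis
    using False centralizer_uminus[OF letters_quotient_in_centralizer[of s]] by (simp add: signed_def)
qed (simp add: signed_def letters_quotient_in_centralizer)

lemma conjugate_signed_letters_eq:
  assumes "x \<in> N"
  shows "conjugate (signed e (p s)) x = conjugate (signed e (q s)) x"
proof -
  let ?d = "- signed e (q s) + signed e (p s)"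
  have "?d + x = x + ?d"
    using signed_letters_quotient_in_centralizer assms unfolding centralizer_def by blast
  then have "conjugate (signed e (q s) + ?d) x = conjugate (signed e (q s)) x"
    by (rule conjugate_add_commuting)
  then show ?thesis
    by simp
qed

lemma commutator_letter_word_in: "commutator (signed e (p s)) (word_eval q w) \<in> N"
proof (induction w)
  case (Cons l w)
  then show ?case
    by (cases l) (simp add: commutator_add_right commutator_letters_in normal_closure.add
        normal_closure.conjugate)
qed (simp add: commutator_def normal_closure.zero)

lemma commutator_words_in: "commutator (word_eval p v) (word_eval q w) \<in> N"
proof (induction v)
  case (Cons l v)
  then show ?case
    by (cases l) (simp add: commutator_add_left commutator_letter_word_in normal_closure.add
        normal_closure.conjugate)
qed (simp add: commutator_def normal_closure.zero)

lemma commutator_letter_word_swap: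
  "commutator (signed e (q s)) (word_eval p w) = commutator (signed e (p s)) (word_eval q w)"
proof (induction w)
  case (Cons l w)
  obtain t e' where l: "l = (t, e')" by (cases l)
  have "commutator (signed e (q s)) (word_eval p (l # w))
      = commutator (signed e (q s)) (signed e' (p t))
        + conjugate (signed e' (p t)) (commutator (signed e (q s)) (word_eval p w))"
    by (simp add: l commutator_add_right)
  also have "\<dots> = commutator (signed e (p s)) (signed e' (q t))
        + conjugate (signed e' (q t)) (commutator (signed e (p s)) (word_eval q w))"
    using Cons conjugate_signed_letters_eq[OF commutator_letter_word_in]
    by (simp add: commutator_letters_swap)
  also have "\<dots> = commutator (signed e (p s)) (word_eval q (l # w))"
    by (simp add: l commutator_add_right)
  finally show ?case .
qed (simp add: commutator_def)

lemma commutator_words_swap: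
  "commutator (word_eval q v) (word_eval p w) = commutator (word_eval p v) (word_eval q w)"
proof (induction v)
  case (Cons l v)
  obtain s e where l: "l = (s, e)" by (cases l)
  show ?case
    using Cons conjugate_signed_letters_eq[OF commutator_words_in]
    by (simp add: l commutator_add_left commutator_letter_word_swap)
qed (simp add: commutator_def)

lemma words_diff_in_centralizer: "word_eval p w - word_eval q w \<in> centralizer N"
proof (induction w)
  case (Cons l w)
  obtain s e where l: "l = (s, e)" by (cases l)
  have "- signed e (q s) + signed e (p s) = signed e (p s) - signed e (q s)"
    by (rule commute_minus[OF signed_commute[OF letters_commute]])
  then have "signed e (p s) - signed e (q s) \<in> centralizer N"
    using signed_letters_quotient_in_centralizer by metis
  moreover have "word_eval p (l # w) - word_eval q (l # w)
      = conjugate (signed e (p s)) (word_eval p w - word_eval q w) + (signed e (p s) - signed e (q s))"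
    by (simp add: l conjugate_def del: add_uminus_conv_diff add: group_add_normalize)
  ultimately show ?case
    using Cons by (auto intro: centralizer_add centralizer_conjugate normal_closure.conjugate)
qed (simp add: centralizer_zero)

lemma words_quotient_in_centralizer: "- word_eval q w + word_eval p w \<in> centralizer N"
proof -
  have "conjugate (- word_eval q w) (word_eval p w - word_eval q w) \<in> centralizer N"
    by (intro centralizer_conjugate normal_closure.conjugate words_diff_in_centralizer)
  then show ?thesis
    by (simp add: conjugate_def del: add_uminus_conv_diff add: group_add_normalize)
qed

lemma words_commute: "word_eval p w + word_eval q w = word_eval q w + word_eval p w"
proof (induction w)
  case (Cons l w)
  obtain s e where l: "l = (s, e)" by (cases l)
  have "signed e (p s) - signed e (q s) \<in> centralizer N"
    using words_diff_in_centralizer[of "[l]"] by (simp add: l)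
  moreover have "commutator (signed e (q s)) (word_eval p w) \<in> N"
    using commutator_letter_word_swap commutator_letter_word_in by simp
  ultimately have "(signed e (p s) - signed e (q s)) + commutator (signed e (q s)) (word_eval p w)
      = commutator (signed e (q s)) (word_eval p w) + (signed e (p s) - signed e (q s))"
    unfolding centralizer_def by blast
  then show ?case
    using add_commute_of_commutators[OF Cons signed_commute[OF letters_commute] refl
        commutator_letter_word_swap[symmetric]]
    by (simp add: l)
qed simp

end

quotient_type K = "kgen word" / "eq_mod_relators K_relators"
  by (rule equivp_eq_mod_relators)

instantiation K :: group_add
begin

lift_definition zero_K :: K is "[]" .

lift_definition plus_K :: "K \<Rightarrow> K \<Rightarrow> K" is "(@)"
  by (rule eq_mod_relators_append)

lift_definition uminus_K :: "K \<Rightarrow> K" is inv_word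
  by (rule eq_mod_relators_inv_word)

lift_definition minus_K :: "K \<Rightarrow> K \<Rightarrow> K" is "\<lambda>u v. u @ inv_word v"
  by (intro eq_mod_relators_append eq_mod_relators_inv_word)

instance
proof
  fix a b c :: K
  show "a + b + c = a + (b + c)"
    by transfer (simp add: equivp_reflp[OF equivp_eq_mod_relators])
  show "0 + a = a" and "a + 0 = a" and "a + - b = a - b"
    by (transfer, simp add: equivp_reflp[OF equivp_eq_mod_relators])+
  show "- a + a = 0"
    by transfer (simp add: eq_mod_relators_if_free_eq free_eq_inv_word_append)
qed

end

definition kclass :: "kgen word \<Rightarrow> K" where
  "kclass = abs_K"

lemma kclass_Nil [simp]: "kclass [] = 0"
  and kclass_append [simp]: "kclass (u @ v) = kclass u + kclass v"
  and kclass_inv_word [simp]: "kclass (inv_word u) = - kclass u"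
  by (simp_all add: kclass_def zero_K.abs_eq plus_K.abs_eq uminus_K.abs_eq)

lemma kclass_eq_iff: "kclass u = kclass v \<longleftrightarrow> eq_mod_relators K_relators u v"
  by (simp add: kclass_def K.abs_eq_iff)

lemma kclass_surj: "\<exists>w. kclass w = x"
  unfolding kclass_def by (metis Quotient3_abs_rep Quotient3_K)

definition gen :: "kgen \<Rightarrow> K" where
  "gen a = kclass [(a, True)]"

lemma kclass_letter [simp]: "kclass [(a, e)] = signed e (gen a)"
  using kclass_inv_word[of "[(a, True)]"]
  by (cases e) (simp_all add: gen_def signed_def inv_letter_def)

lemma word_eval_gen: "word_eval gen w = kclass w"
proof (induction w)
  case (Cons l w)
  then show ?case
    using kclass_append[of "[l]" w] by (cases l) simp
qed simp

lemma kclass_subst: "kclass (subst \<sigma> w) = word_eval (\<lambda>a. kclass (\<sigma> a)) w"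
  by (simp add: word_eval_gen[symmetric] word_eval_subst)

lemma kclass_comm [simp]: "kclass (comm u v) = commutator (kclass u) (kclass v)"
  by (simp add: word_eval_gen[symmetric])

lemma kclass_relator: "r \<in> K_relators \<Longrightarrow> kclass r = 0"
  using kclass_eq_iff[of r "[]"] eq_mod_relators_iff_null_rep[of K_relators r "[]"]
  by (auto simp: null_rep_def intro!: exI[of _ "[([], r, True)]"])

lemma gen_X1_Y1_commute: "gen X1 + gen Y1 = gen Y1 + gen X1"
  and gen_X2_Y2_commute: "gen X2 + gen Y2 = gen Y2 + gen X2"
  using kclass_relator[of "comm (gw X1 True) (gw Y1 True)"]
    kclass_relator[of "comm (gw X2 True) (gw Y2 True)"]
  by (simp_all add: K_relators_def gw_def commutator_eq_0_iff signed_def)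

lemma commutator_gen_relation:
  "commutator (signed e1 (gen X1)) (signed e2 (gen Y2)) + commutator (signed e2 (gen X2)) (signed e1 (gen Y1)) = 0"
  using kclass_relator[of "comm (gw X1 e1) (gw Y2 e2) @ comm (gw X2 e2) (gw Y1 e1)"]
  by (auto simp: K_relators_def gw_def)

lift_definition induced :: "(kgen \<Rightarrow> 'g::group_add) \<Rightarrow> K \<Rightarrow> 'g"
  is "\<lambda>f w. if respects_relators K_relators f then word_eval f w else 0"
  by (auto intro: word_eval_eq_mod_relators)

lemma induced_kclass: "respects_relators K_relators f \<Longrightarrow> induced f (kclass w) = word_eval f w"
  by (simp add: kclass_def induced.abs_eq)

lemma induced_add:
  assumes "respects_relators K_relators f"
  shows "induced f (x + y) = induced f x + induced f y"
proof -
  obtain u v where "x = kclass u" "y = kclass v"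
    using kclass_surj by metis
  then show ?thesis
    using induced_kclass[OF assms, of "u @ v"] by (simp add: induced_kclass[OF assms])
qed

definition preserves_relators :: "(kgen \<Rightarrow> kgen word) \<Rightarrow> bool" where
  "preserves_relators \<sigma> \<longleftrightarrow> (\<forall>r \<in> K_relators. kclass (subst \<sigma> r) = 0)"

definition subst_endo :: "(kgen \<Rightarrow> kgen word) \<Rightarrow> K \<Rightarrow> K" where
  "subst_endo \<sigma> = induced (\<lambda>a. kclass (\<sigma> a))"

lemma respects_relators_subst:
  "preserves_relators \<sigma> \<Longrightarrow> respects_relators K_relators (\<lambda>a. kclass (\<sigma> a))"
  by (simp add: preserves_relators_def respects_relators_def kclass_subst)

lemma subst_endo_kclass: "preserves_relators \<sigma> \<Longrightarrow> subst_endo \<sigma> (kclass w) = kclass (subst \<sigma> w)"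
  by (simp add: subst_endo_def induced_kclass respects_relators_subst kclass_subst)

lemma subst_endo_add: "preserves_relators \<sigma> \<Longrightarrow> subst_endo \<sigma> (x + y) = subst_endo \<sigma> x + subst_endo \<sigma> y"
  by (simp add: subst_endo_def induced_add respects_relators_subst)

lemma subst_endo_subst_endo:
  assumes "preserves_relators \<sigma>" and "preserves_relators \<tau>"
  shows "subst_endo \<sigma> (subst_endo \<tau> (kclass w)) = word_eval (\<lambda>a. kclass (subst \<sigma> (\<tau> a))) w"
proof -
  have "subst_endo \<sigma> (subst_endo \<tau> (kclass w)) = kclass (subst \<sigma> (subst \<tau> w))"
    using assms by (simp only: subst_endo_kclass)
  then show ?thesis
    by (simp add: kclass_subst word_eval_subst)
qed

lemma subst_endo_commute:
  assumes "preserves_relators \<sigma>" and "preserves_relators \<tau>"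
    and "\<And>a. kclass (subst \<sigma> (\<tau> a)) = kclass (subst \<tau> (\<sigma> a))"
  shows "subst_endo \<sigma> (subst_endo \<tau> x) = subst_endo \<tau> (subst_endo \<sigma> x)"
  using kclass_surj[of x] assms by (auto simp: subst_endo_subst_endo)

lemma subst_endo_inverse:
  assumes "preserves_relators \<sigma>" and "preserves_relators \<tau>"
    and "\<And>a. kclass (subst \<sigma> (\<tau> a)) = kclass [(a, True)]"
  shows "subst_endo \<sigma> (subst_endo \<tau> x) = x"
  using kclass_surj[of x] assms by (auto simp: subst_endo_subst_endo word_eval_gen signed_def)

lemma subst_endo_conjugate:
  assumes "preserves_relators \<sigma>" and "preserves_relators \<tau>"
    and "\<And>a. kclass (\<sigma> a) = kclass (c @ \<tau> a @ inv_word c)"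
  shows "subst_endo \<sigma> x = conjugate (kclass c) (subst_endo \<tau> x)"
proof -
  obtain w where "x = kclass w"
    using kclass_surj by metis
  moreover have "(\<lambda>a. kclass (\<sigma> a)) = (\<lambda>a. conjugate (kclass c) (kclass (\<tau> a)))"
    using assms(3) by (simp add: conjugate_def diff_conv_add_uminus add.assoc del: add_uminus_conv_diff)
  ultimately show ?thesis
    using assms(1,2) by (simp only: subst_endo_kclass kclass_subst word_eval_conjugate)
qed

abbreviation (input) x1 :: "kgen \<times> bool" where "x1 \<equiv> (X1, True)"
abbreviation (input) x1' :: "kgen \<times> bool" where "x1' \<equiv> (X1, False)"
abbreviation (input) x2 :: "kgen \<times> bool" where "x2 \<equiv> (X2, True)"
abbreviation (input) x2' :: "kgen \<times> bool" where "x2' \<equiv> (X2, False)"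
abbreviation (input) y1 :: "kgen \<times> bool" where "y1 \<equiv> (Y1, True)"
abbreviation (input) y1' :: "kgen \<times> bool" where "y1' \<equiv> (Y1, False)"
abbreviation (input) y2 :: "kgen \<times> bool" where "y2 \<equiv> (Y2, True)"
abbreviation (input) y2' :: "kgen \<times> bool" where "y2' \<equiv> (Y2, False)"

definition K_relator_list :: "kgen word list" where
  "K_relator_list = [comm (gw X1 True) (gw Y1 True), comm (gw X2 True) (gw Y2 True),
    comm (gw X1 True) (gw Y2 True) @ comm (gw X2 True) (gw Y1 True),
    comm (gw X1 True) (gw Y2 False) @ comm (gw X2 False) (gw Y1 True),
    comm (gw X1 False) (gw Y2 True) @ comm (gw X2 True) (gw Y1 False),
    comm (gw X1 False) (gw Y2 False) @ comm (gw X2 False) (gw Y1 False)]"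

lemma K_relators_eq: "K_relators = set K_relator_list"
proof -
  have "{comm (gw X1 e1) (gw Y2 e2) @ comm (gw X2 e2) (gw Y1 e1) |e1 e2. True}
      = (\<lambda>(e1, e2). comm (gw X1 e1) (gw Y2 e2) @ comm (gw X2 e2) (gw Y1 e1)) ` (UNIV \<times> UNIV)"
    by auto
  also have "UNIV \<times> UNIV = {(True, True), (True, False), (False, True), (False, False)}"
    by auto
  finally show ?thesis
    by (auto simp: K_relators_def K_relator_list_def)
qed

text \<open>A certificate for \<open>u = v\<close> in \<open>K\<close> is a list of triples \<open>(c, i, e)\<close>, each standing for the
  conjugate \<open>c r\<^sub>i\<^sup>\<plusminus>\<^sup>1 c\<^sup>-\<^sup>1\<close> of the \<open>i\<close>-th relator, whose product is freely equal to \<open>u v\<^sup>-\<^sup>1\<close>.\<close>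
definition certifies :: "(kgen word \<times> nat \<times> bool) list \<Rightarrow> kgen word \<Rightarrow> kgen word \<Rightarrow> bool" where
  "certifies qs u v \<longleftrightarrow> (\<forall>(c, i, e) \<in> set qs. i < length K_relator_list) \<and>
     free_reduce (u @ inv_word v) = free_reduce (conj_prod (map (\<lambda>(c, i, e). (c, K_relator_list ! i, e)) qs))"

lemma kclass_eq_if_certifies:
  assumes "certifies qs u v"
  shows "kclass u = kclass v"
proof -
  let ?ps = "map (\<lambda>(c, i, e). (c, K_relator_list ! i, e)) qs"
  have "\<forall>(c, r, e) \<in> set ?ps. r \<in> K_relators"
    using assms by (auto simp: certifies_def K_relators_eq)
  moreover have "free_eq (u @ inv_word v) (conj_prod ?ps)"
    using assms unfolding certifies_def by (blast intro: free_eq_if_free_reduce_eq)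
  ultimately show ?thesis
    unfolding kclass_eq_iff eq_mod_relators_def by (blast intro: eq_by_relatorsI)
qed

lemma preserves_relators_if_certified:
  assumes "list_all2 (\<lambda>r qs. certifies qs (subst \<sigma> r) []) K_relator_list certs"
  shows "preserves_relators \<sigma>"
  unfolding preserves_relators_def K_relators_eq
  using assms kclass_eq_if_certifies by (fastforce simp: list_all2_conv_all_nth in_set_conv_nth)

lemma kclass_eq_on_generators_if_certified:
  assumes "list_all2 (\<lambda>a qs. certifies qs (u a) (v a)) [X1, X2, Y1, Y2] certs"
  shows "kclass (u a) = kclass (v a)"
  using assms by (cases a) (auto simp: list_all2_Cons1 kclass_eq_if_certifies)

section \<open>Twisting automorphisms of \<open>K\<close>\<close>

text \<open>In \<open>F\<^sub>2\<^sup>3 \<supseteq> K\<close>, where \<open>x\<^sub>i = (a\<^sub>i, 1, c\<^sub>i\<^sup>-\<^sup>1)\<close> and \<open>y\<^sub>i = (1, b\<^sub>i, c\<^sub>i\<^sup>-\<^sup>1)\<close>,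
  \<open>twist\<^sub>i\<close> is conjugation by \<open>c\<^sub>i\<^sup>-\<^sup>1\<close> in the third factor, \<open>shear\<^sub>1\<close> conjugation by \<open>a\<^sub>1\<^sup>-\<^sup>1\<close>
  in the first and \<open>shear\<^sub>2\<close> conjugation by \<open>b\<^sub>2\<^sup>-\<^sup>1\<close> in the second. So conjugation by \<open>x\<^sub>1\<close> is
  \<open>twist\<^sub>1 \<circ> shear\<^sub>1\<^sup>-\<^sup>1\<close>, conjugation by \<open>y\<^sub>2\<close> is \<open>twist\<^sub>2 \<circ> shear\<^sub>2\<^sup>-\<^sup>1\<close>, and on the normal closure
  of \<open>[x\<^sub>1, y\<^sub>2]\<close>, which lies in the third factor, the shears act trivially.\<close>
definition twist1 :: "kgen \<Rightarrow> kgen word" where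
  "twist1 a = (case a of X1 \<Rightarrow> [x1] | X2 \<Rightarrow> [y1, x2, y1'] | Y1 \<Rightarrow> [y1] | Y2 \<Rightarrow> [x1, y2, x1'])"

definition twist1_inv :: "kgen \<Rightarrow> kgen word" where
  "twist1_inv a = (case a of X1 \<Rightarrow> [x1] | X2 \<Rightarrow> [y1', x2, y1] | Y1 \<Rightarrow> [y1] | Y2 \<Rightarrow> [x1', y2, x1])"

definition twist2 :: "kgen \<Rightarrow> kgen word" where
  "twist2 a = (case a of X1 \<Rightarrow> [y2, x1, y2'] | X2 \<Rightarrow> [x2] | Y1 \<Rightarrow> [x2, y1, x2'] | Y2 \<Rightarrow> [y2])"

definition twist2_inv :: "kgen \<Rightarrow> kgen word" where
  "twist2_inv a = (case a of X1 \<Rightarrow> [y2', x1, y2] | X2 \<Rightarrow> [x2] | Y1 \<Rightarrow> [x2', y1, x2] | Y2 \<Rightarrow> [y2])"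

definition shear1 :: "kgen \<Rightarrow> kgen word" where
  "shear1 a = (case a of X1 \<Rightarrow> [x1] | X2 \<Rightarrow> [x1', y1, x2, y1', x1] | Y1 \<Rightarrow> [y1] | Y2 \<Rightarrow> [y2])"

definition shear2 :: "kgen \<Rightarrow> kgen word" where
  "shear2 a = (case a of X1 \<Rightarrow> [x1] | X2 \<Rightarrow> [x2] | Y1 \<Rightarrow> [y2', x2, y1, x2', y2] | Y2 \<Rightarrow> [y2])"

lemmas certificate_simps = certifies_def K_relator_list_def twist1_def twist1_inv_def
  twist2_def twist2_inv_def shear1_def shear2_def comm_def gw_def inv_letter_def

lemma preserves_relators_twist1: "preserves_relators twist1"
  by (rule preserves_relators_if_certified[where certs =
    "[[([x1, y1, x1', y1'], 0, True)],
      [([y1, x2, y1', x1, y2, x1', y1, x2', y1', x1, y2', x1', y1, x2, y1', x1, y2, x1'], 3, False),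
       ([y1, x2, y1', x1, y2, x1', y1, x2', y1', x1, y2', x1'], 2, False),
       ([y1, x2, y1', x1, y2, x1', y1, x2', y1', y2'], 1, True)],
      [([x1, x1, y2, x1', y2', x1', y1, x2, y1, x2', y1'], 2, True),
       ([x1, x1, y2, x1', y2', x1', y1, y2, x1, y2', x1', y1'], 0, True),
       ([x1, x1, y2, x1', y2', x1', y1, y2, x1, y2', y1'], 2, True),
       ([x1, x1, y2, x1', y2', x1', y1, y2, x1, y2', x2, y1', x2', y1], 4, True),
       ([x1, x1, y2, x1', y2', x1', y1, x1, y1', x1'], 0, False)],
      [([x1, x1, y2', x1', y2, x1'], 3, False),
       ([x1, x1, y2', x1', x1', y2, x2', y2'], 1, True),
       ([x1, x1, y2', x1', x1', x2', y2, y1, y1, x2, y1', y1'], 0, True),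
       ([x1, x1, y2', x1', y2, x2', y1, x2, y1'], 3, True),
       ([x1, y1, x2', y1', x2, y2', x1', x2', y2, y1, y1, x2, y1'], 3, True),
       ([x1, y1, x2', y1', x2, y2', x1', x2', y2, y1, x2, y2', x1, y2, x2', y1', x2, y1], 5, True),
       ([x1, y1, x2', y1', x2, y2', x1', x2', y2, y1, x2, x1, y1', x1'], 0, False),
       ([x1, y1, x2', y1', x2, y2', x1', y2, x2', y1, x2, y1'], 3, True),
       ([x1, y1, x2', y1', x2, x1', y1, x2', y1', x2, y2', x2'], 1, False)],
      [([y2, x1, y2', x1'], 2, False)],
      [([y2', x1, y2, x1'], 3, False)]]"])
    (simp add: certificate_simps)

lemma preserves_relators_twist1_inv: "preserves_relators twist1_inv"
  by (rule preserves_relators_if_certified[where certs =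
    "[[([x1, y1, x1', y1'], 0, True)],
      [([y1', x2, y1, x1', y2, x1, y1', x2', y1, x1', y2', x1, y1', x2, y1, x1', y2, x1], 5, False),
       ([y1', x2, y1, x1', y2, x1, y1', x2', y1, x1', y2', x1], 4, False),
       ([y1', x2, y1, x1', y2, x1, y1', x2', y1, y2'], 1, True)],
      [([y2, x1', y2', x1], 4, False)],
      [([y2', x1', y2, x1], 5, False)],
      [([x1', x1', y2, x1, y2', x1, y1', x1'], 0, False),
       ([x1', x1', y2, x1, y2', y1', x1, x2, y1', x2', y1, y1, x1', y1'], 0, True),
       ([x1', x1', y2, x1, y2', y1', x1, x2, y1', x2', y1], 4, True),
       ([x1', x1', y2, x1, y2', y1'], 2, True),
       ([x1', x1', y2, x1, y2', x2, y1', x2', y1], 4, True)],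
      [([x1', x1', y2', x1, y2, x1, y1', x2', y1', x2, y1], 5, True),
       ([x1', x1', y2', x1, y2, x1, y1', y2', x1', y2, x1, y1, x1', y1'], 0, True),
       ([x1', x1', y2', x1, y2, x1, y1', y2', x1', y2, y1], 5, True),
       ([x1', x1', y2', x1, y2, x1, y1', y2', x1', y2, x2', y1, x2, y1'], 3, True),
       ([x1', x1', y2', x1, y2, x1, y1', x1', y1, x1, y1', x1'], 0, False)]]"])
    (simp add: certificate_simps)

lemma preserves_relators_twist2: "preserves_relators twist2"
  by (rule preserves_relators_if_certified[where certs =
    "[[([y2, x1, y2', x2, y1, x2', y2, x1', y2', x2, y1', x2', y2, x1, y2', x1'], 2, False),
       ([y2, x1, y2', x2, y1, x2', y2, x1', y2', x1], 4, False),
       ([y2, x1, y2', y1, x1', y1'], 0, True)],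
      [([x2, y2, x2', y2'], 1, True)],
      [([y2, x1, y2, x1', y2', y2', x2, x2, y1, x2', y1'], 2, True),
       ([y2, x1, y2, x1', y2', y2'], 1, True),
       ([y2, x1, y2, x1', y2', x2, x1, y2', x1', x2', y2, x1, y2, x1', y2', x2, y1, x2', y1'], 2, True),
       ([y2, x1, y2, x1', y2', x2, x1, y2', x1', y2, x2', y1, x2, y1'], 3, True),
       ([y2, x1, y2, x1', y2', x2, y1, x2', y1', x2, y2', x2'], 1, False)],
      [([y2, x1, y2', x1'], 2, False)],
      [([y2, x1', y2, x1, y2', y2', x2, x2, y1', x2', y1], 4, True),
       ([y2, x1', y2, x1, y2', y2'], 1, True),
       ([y2, x1', y2, x1, y2', x2, x1', y2', x1, x2', y2, x1', y2, x1, y2', x2, y1', x2', y1], 4, True),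
       ([y2, x1', y2, x1, y2', x2, x1', y2', x1, y2, x2', y1', x2, y1], 5, True),
       ([y2, x1', y2, x1, y2', x2, y1', x2', y1, x2, y2', x2'], 1, False)],
      [([y2, x1', y2', x1], 4, False)]]"])
    (simp add: certificate_simps)

lemma preserves_relators_twist2_inv: "preserves_relators twist2_inv"
  by (rule preserves_relators_if_certified[where certs =
    "[[([y2', x1, y2, x2', y1, x2, y2', x1', y2, x2', y1', x2, y2', x1, y2, x1'], 3, False),
       ([y2', x1, y2, x2', y1, x2, y2', x1', y2, x1], 5, False),
       ([y2', x1, y2, y1, x1', y1'], 0, True)],
      [([x2, y2, x2', y2'], 1, True)],
      [([y2', x1, y2, x1'], 3, False)],
      [([y2', x1, y2', x1', y2, y2, x2', x2', y1, x2, y1', x2, y2', x1, y2, x1'], 3, False),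
       ([y2', x1, y2', x1', y2, y2, x2', x2', y1, x2, x2, y1', x1, y2', y2', x1', y2, y2, x2', y2'], 1, True),
       ([y2', x1, y2', x1', y2, y2, x2', x2', y1, x2, x2, y1', x1, y2', y2', x1', y2, x2', y2'], 1, True),
       ([y2', x1, y2', x1', y2, y2, x2', x2', y1, x2, x2, y1', x1, y2', y2', x1', x2', y2, y2, x2', y1, x2, y1'], 3, True),
       ([y2', x1, y2', x1', y2, y2, x2', x2', y1, x2, x2, y1', x1, y2', x1', y2, x2', y1, x2, y1'], 3, True),
       ([y2', x1, y2', x1', y2, y2, x2', x2', y1, x2, y1', x2, y2', x1, y2', x1', x2', y2, x1, y2, x1', x2, y2', x2'], 1, False),
       ([y2', x1, y2', x1', y2, y2, x2', x2', y1, x2, y1', x2, y2', x1, y2', x1', x2', y2, x1, y2, x1', y2', x2, y1, x2', y1'], 2, True),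
       ([y2', x1, y2', x1', y2, y2, x2', x2', y1, x2, y1', x2, y2', x1, y2', x1', y2, x2', y1, x2, y1'], 3, True),
       ([y2', x1, y2', x1', y2, y2, x2', x2', y1, x2, y1', x2, y2', y1, x2', y1', x2, y2', x2'], 1, False)],
      [([y2', x1', y2, x1], 5, False)],
      [([y2', x1', y2, x1], 5, False),
       ([x2', y1', x2, y1, x1', y2', y2', x1, y2, y2, x2', y2'], 1, True),
       ([x2', y1', x2, y1, x1', y2', y2', x1, y2, x2', y2'], 1, True),
       ([x2', y1', x2, y1, x1', y2', y2', x1, x2', y2, y2, x2', y1', x2, y1], 5, True),
       ([x2', y1', x2, y1, x1', y2', x1, y2, x2', y1', x2, y1], 5, True),
       ([y2', x1', y2', x1, x2'], 1, False),
       ([y2', x1', y2', x1, y2, x2', y1', x2, y1], 5, True),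
       ([y2', y1', x2', y1], 4, True),
       ([y2', x2'], 1, False)]]"])
    (simp add: certificate_simps)

lemma preserves_relators_shear1: "preserves_relators shear1"
  by (rule preserves_relators_if_certified[where certs =
    "[[([x1, y1, x1', y1'], 0, True)],
      [([x1', y1, x2, y1', x1, y2, x1', y1, x2', y1', x1, y2', x1', y1, x2, y1', x1, y2, x1'], 3, False),
       ([x1', y1, x2, y1', x1, y2, x1', y1, x2', y1', x1, y2', x1'], 2, False),
       ([x1', y1, x2, y1', x1, y2, x1', y1, x2', y1', y2'], 1, True)],
      [([x1, y2, x1', y2', x1', y1, x2, y1'], 0, True),
       ([x1, y2, x1', y2', x1', y1, x2, y1, x2', y1'], 2, True),
       ([x1, y2, x1', y2', x1', y1, y2, x1, y2', y1'], 2, True),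
       ([x1, y2, x1', y2', x1', y1, y2, x1, y2', x2, y1', x2', y1], 4, True),
       ([x1, y2, x1', y2', x1', y1, x1, y1', x1'], 0, False)],
      [([x1, y2', x1', y2, x1', y1, x2', y1'], 0, True),
       ([x1, y2', x1', y2, x1', y1, x2', y1, x2, y1'], 3, True),
       ([x1, y2', x1', y2, x2', y1, x2, y1'], 3, True),
       ([y1, x2', y1', x2, x1', y1, y2', x1, y2, x2', y1', x2, y1], 5, True),
       ([y1, x2', y1', x2, x1', y1, x1, y1', x1'], 0, False)],
      [([x1', y2, x1, y2', x1'], 2, False),
       ([x1', x2, x1, y1', x1', y1, x2', y1'], 0, True),
       ([x1', x2, x1, y1', x1'], 0, False)],
      [([x1', y2', x1, y2, x1'], 3, False),
       ([x1', x2', x1, y1', x1', y1, x2, y1'], 0, True),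
       ([x1', x2', x1, y1', x1'], 0, False)]]"])
    (simp add: certificate_simps)

lemma preserves_relators_shear2: "preserves_relators shear2"
  by (rule preserves_relators_if_certified[where certs =
    "[[([x1, y2', x2, y1, x2', y2, x1', y2', x2, y1', x2', y2, x1, y2', x1'], 2, False),
       ([x1, y2', x2, y1, x2', y2, x1', y2', x1], 4, False),
       ([x1, y2', y1, x1', y1'], 0, True)],
      [([x2, y2, x2', y2'], 1, True)],
      [([x1, y2, x1', y2', x2, y2', x2, y1, x2', y2, x2', y2'], 1, True),
       ([x1, y2, x1', y2', x2, y2', x2, y1, x2', y1'], 2, True),
       ([x1, y2, x1', y2', x2, x1, y2', x1', x2', y2, x1, y2, x1', y2', x2, y1, x2', y1'], 2, True),
       ([x1, y2, x1', y2', x2, x1, y2', x1', y2, x2', y1, x2, y1'], 3, True),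
       ([x1, y2, x1', y2', x2, y1, x2', y1', x2, y2', x2'], 1, False)],
      [([x1, y2', x1'], 2, False),
       ([y2', x2, y1, x2', y1', y2, x2', y2', x2, y1, x2', y2, x2, y2', y1', y2, x2', y2'], 1, True),
       ([y2', x2, y1, x2', y1', y2, x2', y2', x2, y1, x2', y2, x2, y2', x2'], 1, False)],
      [([x1', y2, x1, y2', x2, y2', x2, y1', x2', y2, x2', y2'], 1, True),
       ([x1', y2, x1, y2', x2, y2', x2, y1', x2', y1], 4, True),
       ([x1', y2, x1, y2', x2, x1', y2', x1, x2', y2, x1', y2, x1, y2', x2, y1', x2', y1], 4, True),
       ([x1', y2, x1, y2', x2, x1', y2', x1, y2, x2', y1', x2, y1], 5, True),
       ([x1', y2, x1, y2', x2, y1', x2', y1, x2, y2', x2'], 1, False)],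
      [([x1', y2', x1], 4, False),
       ([y2', x2, y1', x2', y1, y2, x2', y2'], 1, True),
       ([y2', x2, y1', x2', x2', y2, x2, y2', x2'], 1, False)]]"])
    (simp add: certificate_simps)

lemma shear1_twist1_commute: "kclass (subst shear1 (twist1 a)) = kclass (subst twist1 (shear1 a))"
  by (rule kclass_eq_on_generators_if_certified[where certs =
    "[[],
      [([y1, x1', y1, x2, y1', x1, y1', x1', y1, y1, x2', y1', y1'], 0, True),
       ([y1, x1', y1, x2, y1', x1, y1', x1', y1, x1, y1', x1'], 0, False)],
      [],
      []]"])
    (simp add: certificate_simps)

lemma shear1_twist1_inv_commute: "kclass (subst shear1 (twist1_inv a)) = kclass (subst twist1_inv (shear1 a))"
  by (rule kclass_eq_on_generators_if_certified[where certs =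
    "[[],
      [([y1', x1', y1, x2, y1'], 0, True),
       ([y1', x1'], 0, False)],
      [],
      []]"])
    (simp add: certificate_simps)

lemma shear1_twist2_commute: "kclass (subst shear1 (twist2 a)) = kclass (subst twist2 (shear1 a))"
  by (rule kclass_eq_on_generators_if_certified[where certs =
    "[[],
      [([x1', y1, x2, y1', x1, y2, x1', y2', x2, y1, x2', y1', x2', y2, x1, y2', x1', y1, x2, y1'], 2, True),
       ([x1', y1, x2, y1', x1, y2, x1', y2', x2, y1, x2', y1', x2', y2, x1, y2', x1'], 2, False)],
      [([x1', y1, x2, y1', x1, y1, x1', y1, x2', y1', x1, x2, y1', x2', x1', y1, x2, y1'], 0, True),
       ([x1', y1, x2, y1', x1, y1, x1', y1, x2', y1', x1, x2, y1', x2', x1', y1, x2, y1, x2', y1'], 2, True),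
       ([x1', y1, x2, y1', x1, y1, x1', y1, x2', y1', x1, x2, y1', x2', x1', y1, y2, x1, y2', x2, y1', x2', y1], 4, True),
       ([x1', y1, x2, y1', x1, y1, x1', y1, x2', y1', x1, x2, y1', x2', x1', y1, x1, y1', x1'], 0, False)],
      []]"])
    (simp add: certificate_simps)

lemma shear1_twist2_inv_commute: "kclass (subst shear1 (twist2_inv a)) = kclass (subst twist2_inv (shear1 a))"
  by (rule kclass_eq_on_generators_if_certified[where certs =
    "[[],
      [([x1', y1, x2, y1', x1, y2', x1', y2, x2', y1, x2', y1', x2, y2', x1, y2, x1'], 3, False),
       ([x1', y1, x2, y1', x1, y2', x1', y2, x2', y1, x2, y1'], 3, True)],
      [([x1', y1, x2', y1', x1, y1, x1', y1, x2, y1', x1, x2', y1', x2, x1', y1, x2', y1'], 0, True),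
       ([x1', y1, x2', y1', x1, y1, x1', y1, x2, y1'], 3, True),
       ([x1', y1, x2', y1', x1, y1, x1', x2, y2', x1, y2, x2', y1', x2, y1], 5, True),
       ([x1', y1, x2', y1', x1, y1, x1', x2, x1, y1', x1'], 0, False)],
      []]"])
    (simp add: certificate_simps)

lemma shear2_twist1_commute: "kclass (subst shear2 (twist1 a)) = kclass (subst twist1 (shear2 a))"
  by (rule kclass_eq_on_generators_if_certified[where certs =
    "[[],
      [([y2', x2, y1, x2', y2, x2, y2', x2'], 1, False),
       ([y2', x2, y1, x2, y1', x2', y2, y1, x2', y1', y2', x2, y1, x2, y1', x2', y2, x1, y2', x1'], 2, False),
       ([y2', x2, y1, x2, y1', x2', y2, y1, x2', y1', y2', x2, x1, y2, x1'], 3, False),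
       ([y2', x2, y1, x2, y1', x2', y2, y1, x2', y1', y2'], 1, True)],
      [([y2', x2, y1, x2', y2, x1, y2', x1', y1, x2, y1', x2', y1'], 2, True),
       ([y2', x2, y1, x2', y2, x1, y2', x1'], 2, False)],
      []]"])
    (simp add: certificate_simps)

lemma shear2_twist1_inv_commute: "kclass (subst shear2 (twist1_inv a)) = kclass (subst twist1_inv (shear2 a))"
  by (rule kclass_eq_on_generators_if_certified[where certs =
    "[[],
      [([y2', x2, y1', x2'], 1, False),
       ([y2', x2, y1', x2, y1, x2', y2, x1', y2', x1], 4, False),
       ([y2', x2, x1', y2, x1], 5, False),
       ([y2'], 1, True)],
      [([y2', x2, y1, x2', y2, x1', y2', x1, y1', x2, y1', x2', y1], 4, True),
       ([y2', x2, y1, x2', y2, x1', y2', x1], 4, False)],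
      []]"])
    (simp add: certificate_simps)

lemma shear2_twist2_commute: "kclass (subst shear2 (twist2 a)) = kclass (subst twist2 (shear2 a))"
  by (rule kclass_eq_on_generators_if_certified[where certs =
    "[[],
      [],
      [([x2, y2', x2, y1, x2', y2, x2', y2'], 1, True),
       ([x2, y2', x2', y2, x2, y2', x2'], 1, False)],
      []]"])
    (simp add: certificate_simps)

lemma shear2_twist2_inv_commute: "kclass (subst shear2 (twist2_inv a)) = kclass (subst twist2_inv (shear2 a))"
  by (rule kclass_eq_on_generators_if_certified[where certs =
    "[[],
      [],
      [([x2', y2', x2, y1, x2', y2, x2, y2', y1', y2, x2', y2'], 1, True),
       ([x2', y2', x2, y1, x2', y2, x2, y2', x2'], 1, False)],
      []]"])
    (simp add: certificate_simps)

lemma twist1_eq_conjugate_shear1: "kclass (twist1 a) = kclass ([x1] @ shear1 a @ inv_word [x1])"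
  by (rule kclass_eq_on_generators_if_certified[where certs =
    "[[],
      [],
      [([y1, x1, y1', x1'], 0, False)],
      []]"])
    (simp add: certificate_simps)

lemma twist2_eq_conjugate_shear2: "kclass (twist2 a) = kclass ([y2] @ shear2 a @ inv_word [y2])"
  by (rule kclass_eq_on_generators_if_certified[where certs =
    "[[],
      [([x2, y2, x2', y2'], 1, True)],
      [],
      []]"])
    (simp add: certificate_simps)

lemma twist1_twist1_inv_inverse: "kclass (subst twist1 (twist1_inv a)) = kclass [(a, True)]"
  by (rule kclass_eq_on_generators_if_certified[where certs =
    "[[],
      [],
      [],
      []]"])
    (simp add: certificate_simps)

lemma twist2_twist2_inv_inverse: "kclass (subst twist2 (twist2_inv a)) = kclass [(a, True)]"
  by (rule kclass_eq_on_generators_if_certified[where certs =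
    "[[],
      [],
      [],
      []]"])
    (simp add: certificate_simps)

section \<open>\<open>y\<^sub>i\<^sup>-\<^sup>1 x\<^sub>i\<close> centralizes the normal closure of \<open>[x\<^sub>1, y\<^sub>2]\<close>\<close>

definition z1 :: K where
  "z1 = kclass [y1', x1]"

definition z2 :: K where
  "z2 = kclass [y2', x2]"

definition b0 :: K where
  "b0 = kclass (comm [x1] [y2])"

lemma z1_eq: "z1 = - gen Y1 + gen X1"
  and z2_eq: "z2 = - gen Y2 + gen X2"
  and b0_eq: "b0 = commutator (gen X1) (gen Y2)"
  by (simp_all add: z1_def z2_def b0_def signed_def flip: word_eval_gen)

definition twists :: "(kgen \<Rightarrow> kgen word) set" where
  "twists = {twist1, twist1_inv, twist2, twist2_inv}"

lemma preserves_relators_twists: "\<sigma> \<in> twists \<Longrightarrow> preserves_relators \<sigma>"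
  by (auto simp: twists_def preserves_relators_twist1 preserves_relators_twist1_inv
      preserves_relators_twist2 preserves_relators_twist2_inv)

lemma shears_commute_twists:
  assumes "\<sigma> \<in> twists"
  shows "subst_endo shear1 (subst_endo \<sigma> x) = subst_endo \<sigma> (subst_endo shear1 x)"
    and "subst_endo shear2 (subst_endo \<sigma> x) = subst_endo \<sigma> (subst_endo shear2 x)"
  using assms unfolding twists_def
  by (auto intro!: subst_endo_commute simp: preserves_relators_twist1 preserves_relators_twist1_inv
      preserves_relators_twist2 preserves_relators_twist2_inv preserves_relators_shear1
      preserves_relators_shear2 shear1_twist1_commute shear1_twist1_inv_commute
      shear1_twist2_commute shear1_twist2_inv_commute shear2_twist1_commute
      shear2_twist1_inv_commute shear2_twist2_commute shear2_twist2_inv_commute)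

lemma twists_fix_z:
  assumes "\<sigma> \<in> twists"
  shows "subst_endo \<sigma> z1 = z1" and "subst_endo \<sigma> z2 = z2"
proof -
  have "certifies [] (subst twist1 [y1', x1]) [y1', x1]"
    "certifies [] (subst twist1_inv [y1', x1]) [y1', x1]"
    "certifies [([x2, y1', x2', y2, x1, y2', x1'], 2, False)]
      (subst twist2 [y1', x1]) [y1', x1]"
    "certifies [([x2', y1', x2, y2', x1, y2, x1'], 3, False)]
      (subst twist2_inv [y1', x1]) [y1', x1]"
    "certifies [([x1, y2', x1'], 2, False)] (subst twist1 [y2', x2]) [y2', x2]"
    "certifies [([x1', y2', x1], 4, False)] (subst twist1_inv [y2', x2]) [y2', x2]"
    "certifies [] (subst twist2 [y2', x2]) [y2', x2]"
    "certifies [] (subst twist2_inv [y2', x2]) [y2', x2]"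
    by (simp_all add: certificate_simps)
  then show "subst_endo \<sigma> z1 = z1" and "subst_endo \<sigma> z2 = z2"
    using assms preserves_relators_twists[OF assms] unfolding twists_def z1_def z2_def
    by (auto simp: subst_endo_kclass dest: kclass_eq_if_certifies)
qed

lemma z_commute_b0: "z1 + b0 = b0 + z1" "z2 + b0 = b0 + z2"
proof -
  have "certifies
      [([y1', x1, x1, y2, x1', y2', x1', y1, y2, x1, y2', x1', y1'], 0, True),
       ([y1', x1, x1, y2, x1', y2', x1', y1, y2, x1, y2', y1'], 2, True),
       ([y1', x1, x1, y2, x1', y2', x1', y1, y2, x1, y2', x2, y1', x2', y1], 4, True),
       ([y1', x1, x1, y2, x1', y2', x1', y1, x1, y1', x1'], 0, False)]
      ([y1', x1] @ comm [x1] [y2]) (comm [x1] [y2] @ [y1', x1])"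
    "certifies
      [([y2', x2, x1, y2, x1', y2', x2'], 1, False),
       ([y2', x2, x1, y2, x1', x2', y2, x1, y2', x1'], 2, False),
       ([y2', x2, x1, y2, x1', y1, x2', y1', y2', x2, x1, y2, x1'], 3, False),
       ([y2', x2, x1, y2, x1', y1, x2', y1', y2'], 1, True)]
      ([y2', x2] @ comm [x1] [y2]) (comm [x1] [y2] @ [y2', x2])"
    by (simp_all add: certificate_simps)
  from this[THEN kclass_eq_if_certifies] show "z1 + b0 = b0 + z1" and "z2 + b0 = b0 + z2"
    by (simp_all only: z1_def z2_def b0_def kclass_append[symmetric])
qed

inductive_set twist_orbit :: "K set" where
  base: "b0 \<in> twist_orbit"
| step: "x \<in> twist_orbit \<Longrightarrow> \<sigma> \<in> twists \<Longrightarrow> subst_endo \<sigma> x \<in> twist_orbit"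

lemma shears_fix_twist_orbit:
  assumes "x \<in> twist_orbit"
  shows "subst_endo shear1 x = x \<and> subst_endo shear2 x = x"
  using assms
proof (induction rule: twist_orbit.induct)
  case base
  then show ?case
    by (simp add: b0_def subst_endo_kclass preserves_relators_shear1 preserves_relators_shear2
        del: kclass_comm) (simp add: shear1_def shear2_def comm_def inv_letter_def)
qed (simp add: shears_commute_twists)

lemma twist_orbit_commute_z:
  assumes "x \<in> twist_orbit"
  shows "z1 + x = x + z1 \<and> z2 + x = x + z2"
  using assms
proof (induction rule: twist_orbit.induct)
  case base
  then show ?case using z_commute_b0 by simp
next
  case (step x \<sigma>)
  have "z + subst_endo \<sigma> x = subst_endo \<sigma> x + z" if "z + x = x + z" "subst_endo \<sigma> z = z" for z
    using that subst_endo_add[OF preserves_relators_twists[OF step(2)]] by metis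
  then show ?case
    using step twists_fix_z by blast
qed


lemma twist_orbit_conjugate_closed:
  assumes "\<tau> \<in> twists" and "\<tau>' \<in> twists"
    and twist_eq: "\<And>y. subst_endo \<tau> y = conjugate g (subst_endo \<kappa> y)"
    and twist_inverse: "\<And>y. subst_endo \<tau> (subst_endo \<tau>' y) = y"
    and shear_fixes: "\<And>y. y \<in> twist_orbit \<Longrightarrow> subst_endo \<kappa> y = y"
    and x: "x \<in> twist_orbit"
  shows "conjugate (signed e g) x \<in> twist_orbit"
proof (cases e)
  case True
  then show ?thesis
    using twist_orbit.step[OF x assms(1)] twist_eq[of x] shear_fixes[OF x] by (simp add: signed_def)
next
  case False
  define y where "y = subst_endo \<tau>' x"
  have y: "y \<in> twist_orbit"
    unfolding y_def using x assms(2) by (rule twist_orbit.step)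
  have "x = conjugate g y"
    using twist_inverse[of x] twist_eq[of y] shear_fixes[OF y] by (simp add: y_def)
  then show ?thesis
    using False y by (simp add: signed_def conjugate_conjugate)
qed

lemma twist_orbit_conjugate_x1_y2:
  assumes "x \<in> twist_orbit"
  shows "conjugate (signed e (gen X1)) x \<in> twist_orbit"
    and "conjugate (signed e (gen Y2)) x \<in> twist_orbit"
proof -
  have "subst_endo twist1 y = conjugate (gen X1) (subst_endo shear1 y)" for y
    using subst_endo_conjugate[OF preserves_relators_twist1 preserves_relators_shear1
        twist1_eq_conjugate_shear1] by (simp add: signed_def)
  moreover have "subst_endo twist1 (subst_endo twist1_inv y) = y" for y
    by (rule subst_endo_inverse[OF preserves_relators_twist1 preserves_relators_twist1_inv
          twist1_twist1_inv_inverse])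
  ultimately show "conjugate (signed e (gen X1)) x \<in> twist_orbit"
    using shears_fix_twist_orbit
    by (intro twist_orbit_conjugate_closed[where \<tau> = twist1 and \<tau>' = twist1_inv and \<kappa> = shear1, OF _ _ _ _ _ assms])
       (auto simp: twists_def)
  have "subst_endo twist2 y = conjugate (gen Y2) (subst_endo shear2 y)" for y
    using subst_endo_conjugate[OF preserves_relators_twist2 preserves_relators_shear2
        twist2_eq_conjugate_shear2] by (simp add: signed_def)
  moreover have "subst_endo twist2 (subst_endo twist2_inv y) = y" for y
    by (rule subst_endo_inverse[OF preserves_relators_twist2 preserves_relators_twist2_inv
          twist2_twist2_inv_inverse])
  ultimately show "conjugate (signed e (gen Y2)) x \<in> twist_orbit"
    using shears_fix_twist_orbit
    by (intro twist_orbit_conjugate_closed[where \<tau> = twist2 and \<tau>' = twist2_inv and \<kappa> = shear2, OF _ _ _ _ _ assms])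
       (auto simp: twists_def)
qed

lemma twist_orbit_conjugate_gen:
  assumes "x \<in> twist_orbit"
  shows "conjugate (signed e (gen a)) x \<in> twist_orbit"
proof -
  have commute: "c + y = y + c" "- c + y = y - c" if "y \<in> twist_orbit" "c \<in> {z1, z2}" for c y
    using twist_orbit_commute_z[OF that(1)] that(2) commute_minus[of y c] by auto
  have "gen Y1 = gen X1 + - z1"
    by (simp add: z1_eq minus_add del: add_uminus_conv_diff)
  then have "conjugate (gen Y1) x = conjugate (gen X1) x"
    using conjugate_add_commuting[of "- z1" x "gen X1"] commute[OF assms] by simp
  moreover have "conjugate (gen X2) x = conjugate (gen Y2) x"
    using conjugate_add_commuting[of z2 x "gen Y2"] commute[OF assms] by (simp add: z2_eq)
  moreover have "conjugate (- gen Y1) x = conjugate (- gen X1) x"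
  proof -
    have "- gen Y1 = z1 + - gen X1"
      by (simp add: z1_eq add.assoc del: add_uminus_conv_diff)
    then have "conjugate (- gen Y1) x = conjugate z1 (conjugate (- gen X1) x)"
      by (simp add: conjugate_conjugate)
    then show ?thesis
      using commute(1)[OF twist_orbit_conjugate_x1_y2(1)[OF assms, of False], of z1]
      by (simp add: signed_def conjugate_eq_iff_commute)
  qed
  moreover have "conjugate (- gen X2) x = conjugate (- gen Y2) x"
  proof -
    have "- gen X2 = - z2 + - gen Y2"
      by (simp add: z2_eq minus_add add.assoc del: add_uminus_conv_diff)
    then have "conjugate (- gen X2) x = conjugate (- z2) (conjugate (- gen Y2) x)"
      by (simp add: conjugate_conjugate)
    then show ?thesis
      using commute(2)[OF twist_orbit_conjugate_x1_y2(2)[OF assms, of False], of z2]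
      by (simp add: signed_def conjugate_eq_iff_commute)
  qed
  ultimately show ?thesis
    using twist_orbit_conjugate_x1_y2[OF assms, of True] twist_orbit_conjugate_x1_y2[OF assms, of False]
    by (cases a; cases e) (simp_all add: signed_def)
qed

lemma conjugate_b0_in_twist_orbit: "conjugate g b0 \<in> twist_orbit"
proof -
  obtain w where "g = word_eval gen w"
    using kclass_surj word_eval_gen by metis
  moreover have "conjugate (word_eval gen w) b0 \<in> twist_orbit"
  proof (induction w)
    case (Cons l w)
    then show ?case
      using twist_orbit_conjugate_gen by (cases l) (simp add: conjugate_conjugate[symmetric])
  qed (simp add: twist_orbit.base)
  ultimately show ?thesis
    by simp
qed

lemma z_in_centralizer: "z1 \<in> centralizer (normal_closure {b0})" "z2 \<in> centralizer (normal_closure {b0})"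
  using twist_orbit_commute_z[OF conjugate_b0_in_twist_orbit]
  by (auto intro: centralizer_normal_closureI)

section \<open>The quadratic area bound\<close>

interpretation K: commuting_copies "case_tgen (gen X1) (gen X2)" "case_tgen (gen Y1) (gen Y2)" "{b0}"
proof
  fix s t :: tgen and e e' :: bool
  have commute_0: "commutator (signed d a) (signed d' b) = 0" if "a + b = b + a" for a b :: K and d d'
    using signed_commute[OF that] by (simp add: commutator_eq_0_iff)
  have relation: "commutator (signed e (gen X2)) (signed e' (gen Y1))
      = - commutator (signed e' (gen X1)) (signed e (gen Y2))" for e e'
    using minus_unique[OF commutator_gen_relation[of e' e]] by simp
  show "case_tgen (gen X1) (gen X2) s + case_tgen (gen Y1) (gen Y2) s
      = case_tgen (gen Y1) (gen Y2) s + case_tgen (gen X1) (gen X2) s"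
    by (cases s) (simp_all add: gen_X1_Y1_commute gen_X2_Y2_commute)
  show "- case_tgen (gen Y1) (gen Y2) s + case_tgen (gen X1) (gen X2) s \<in> centralizer (normal_closure {b0})"
    by (cases s) (simp_all add: z1_eq[symmetric] z2_eq[symmetric] z_in_centralizer)
  show "commutator (signed e (case_tgen (gen X1) (gen X2) s)) (signed e' (case_tgen (gen Y1) (gen Y2) t))
      \<in> normal_closure {b0}"
    using commutator_signed_in_normal_closure[of "gen X1" "gen Y2"]
    by (cases s; cases t)
       (simp_all add: commute_0 gen_X1_Y1_commute gen_X2_Y2_commute relation b0_eq[symmetric]
         normal_closure.generator normal_closure.zero normal_closure.uminus)
  show "commutator (signed e (case_tgen (gen Y1) (gen Y2) s)) (signed e' (case_tgen (gen X1) (gen X2) t))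
      = commutator (signed e (case_tgen (gen X1) (gen X2) s)) (signed e' (case_tgen (gen Y1) (gen Y2) t))"
    by (cases s; cases t)
       (simp_all add: commute_0 gen_X1_Y1_commute gen_X2_Y2_commute relation
         commutator_swap[of "signed _ (gen Y1)"] commutator_swap[of "signed _ (gen Y2)"])
qed

lemma kclass_subst2: "kclass (subst2 w (gw a1 True) (gw a2 True)) = word_eval (case_tgen (gen a1) (gen a2)) w"
proof -
  have "(\<lambda>t. kclass (case_tgen (gw a1 True) (gw a2 True) t)) = case_tgen (gen a1) (gen a2)"
    by (auto simp: gw_def signed_def split: tgen.split)
  then show ?thesis
    by (simp add: subst2_conv_subst kclass_subst)
qed

definition commutator_word :: "tgen word \<Rightarrow> tgen word \<Rightarrow> nat \<Rightarrow> kgen word" where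
  "commutator_word v w N =
     comm (subst2 v (gw Y1 True) (gw Y2 True)) (wpow (subst2 w (gw X1 True) (gw X2 True)) N)
     @ inv_word (comm (subst2 v (gw X1 True) (gw X2 True)) (wpow (subst2 w (gw Y1 True) (gw Y2 True)) N))"

lemma K_area_quadratic: "\<exists>k. \<forall>N. eq_by_relators K_relators (k * N * N) (commutator_word v w N) []"
proof -
  define vx vy wx wy where "vx = subst2 v (gw X1 True) (gw X2 True)"
    and "vy = subst2 v (gw Y1 True) (gw Y2 True)" and "wx = subst2 w (gw X1 True) (gw X2 True)"
    and "wy = subst2 w (gw Y1 True) (gw Y2 True)"
  have "kclass ((inv_word wy @ wx) @ wy) = kclass (wy @ inv_word wy @ wx)"
    using K.words_commute[of w] by (simp add: wx_def wy_def kclass_subst2 add.assoc)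
  moreover have "kclass ((inv_word wy @ wx) @ comm vy wx) = kclass (comm vy wx @ inv_word wy @ wx)"
    using K.words_quotient_in_centralizer[of w] K.commutator_words_in[of v w]
      K.commutator_words_swap[of v w]
    by (simp add: vy_def wx_def wy_def kclass_subst2 centralizer_def add.assoc)
  moreover have "kclass (comm vy wx) = kclass (comm vx wy)"
    using K.commutator_words_swap[of v w] by (simp add: vx_def vy_def wx_def wy_def kclass_subst2)
  ultimately obtain k1 k2 k3 where
    "eq_by_relators K_relators k1 ((inv_word wy @ wx) @ wy) (wy @ inv_word wy @ wx)"
    "eq_by_relators K_relators k2 ((inv_word wy @ wx) @ comm vy wx) (comm vy wx @ inv_word wy @ wx)"
    "eq_by_relators K_relators k3 (comm vy wx) (comm vx wy)"
    unfolding kclass_eq_iff eq_mod_relators_def by blast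
  from eq_by_relators_comm_wpow[OF this] show ?thesis
    by (auto simp: commutator_word_def vx_def vy_def wx_def wy_def eq_by_relators_iff_Nil)
qed

lemma finite_uniform_bound:
  fixes P :: "'a \<Rightarrow> nat \<Rightarrow> bool"
  assumes "finite S" and "\<And>x. x \<in> S \<Longrightarrow> \<exists>k. P x k" and "\<And>x k k'. P x k \<Longrightarrow> k \<le> k' \<Longrightarrow> P x k'"
  shows "\<exists>k. \<forall>x \<in> S. P x k"
  using assms(1,2)
proof (induction rule: finite_induct)
  case (insert x S)
  then obtain k k' where "P x k" "\<forall>y \<in> S. P y k'"
    by blast
  then show ?case
    using assms(3) by (intro exI[of _ "max k k'"]) (auto intro: max.cobounded1 max.cobounded2)
qed simp

lemma finite_bounded_tgen_word_pairs:
  "finite {(v :: tgen word, w :: tgen word). length v \<le> m \<and> length w \<le> m}"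
proof -
  have "finite (UNIV :: tgen set)"
    by (rule finite_subset[of _ "{T1, T2}"]) (use tgen.exhaust in auto)
  then have "finite (UNIV :: (tgen \<times> bool) set)"
    by (rule finite_Prod_UNIV) simp
  then have "finite {xs :: tgen word. set xs \<subseteq> UNIV \<and> length xs \<le> m}"
    by (rule finite_lists_length_le)
  then have "finite ({xs :: tgen word. set xs \<subseteq> UNIV \<and> length xs \<le> m}
      \<times> {xs :: tgen word. set xs \<subseteq> UNIV \<and> length xs \<le> m})"
    using finite_cartesian_product by blast
  then show ?thesis
    by (rule finite_subset[rotated]) auto
qed

lemma K_area_quadratic_uniform:
  "\<exists>k. \<forall>v w N. length v \<le> m \<and> length w \<le> m \<longrightarrow>
     eq_by_relators K_relators (k * N * N) (commutator_word v w N) []"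
proof -
  have "\<exists>k. \<forall>p \<in> {(v, w). length v \<le> m \<and> length w \<le> m}.
      \<forall>N. eq_by_relators K_relators (k * N * N) (commutator_word (fst p) (snd p) N) []"
  proof (rule finite_uniform_bound[OF finite_bounded_tgen_word_pairs])
    show "\<forall>N. eq_by_relators K_relators (k' * N * N) (commutator_word (fst p) (snd p) N) []"
      if "\<forall>N. eq_by_relators K_relators (k * N * N) (commutator_word (fst p) (snd p) N) []"
        and "k \<le> k'" for p k k'
      using that by (auto intro: eq_by_relators_mono mult_le_mono1)
  qed (rule K_area_quadratic)
  then show ?thesis
    by auto
qed

theorem lemma4p4:
  fixes m :: nat
  shows "\<exists>C::real. C > 0 \<and>
    (\<forall>(v::tgen word) (w::tgen word) (N::nat). length v \<le> m \<and> length w \<le> m \<longrightarrow>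
      (let W = comm (subst2 v (gw Y1 True) (gw Y2 True)) (wpow (subst2 w (gw X1 True) (gw X2 True)) N)
             @ inv_word (comm (subst2 v (gw X1 True) (gw X2 True)) (wpow (subst2 w (gw Y1 True) (gw Y2 True)) N))
       in null_rep K_relators W \<and> real (area K_relators W) \<le> C * real N ^ 2))"
proof -
  obtain k where k: "\<And>v w N. length v \<le> m \<and> length w \<le> m \<Longrightarrow>
      eq_by_relators K_relators (k * N * N) (commutator_word v w N) []"
    using K_area_quadratic_uniform by blast
  have "real (k * N * N) \<le> (real k + 1) * real N ^ 2" for N
    by (simp add: power2_eq_square algebra_simps)
  then have "null_rep K_relators (commutator_word v w N)
      \<and> real (area K_relators (commutator_word v w N)) \<le> (real k + 1) * real N ^ 2"
    if "length v \<le> m \<and> length w \<le> m" for v w N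
    using area_le_if_eq_by_relators[OF k[OF that]] by (meson of_nat_le_iff order_trans)
  then show ?thesis
    unfolding Let_def commutator_word_def[symmetric] by (intro exI[of _ "real k + 1"]) auto
qed

end
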